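(* Let $d\ge2$, $b_0:[t_0,T]\to\mathbb{R}$, $b:[t_0,T]\to\mathbb{R}^{d^2-1}$ continuous, $H(t)=b_0(t)\mathbb{I}+\sqrt{d/2}\,b(t)\cdot\Lambda$. Suppose $n:[t_0,T]\to\mathbb{R}^{d^2-1}$ is continuously differentiable with $n(t_0)=0$ and $$U_H(t,t_0)=\exp\Bigl\{-i\int_{t_0}^tb_0(\tau)d\tau\Bigr\}\exp\Bigl\{-i\sqrt{\tfrac d2}\,(n(t)\cdot\Lambda)\Bigr\}\quad\text{for all }t\in[t_0,T].$$ Then the solution $(u_0,\tilde u)$ of the Cauchy problem $\dot u_0=\sum_j b_j\tilde u_j$, $\dot{\tilde u}_j=-u_0b_j+\sqrt{d/2}\sum_{k,m}(f_{kmj}-i d_{kmj})b_k\tilde u_m$, $u_0(t_0)=1$, $\tilde u(t_0)=0$, is given by $u_0(t)=\frac1dK_d(n(t))$, $\tilde u(t)=\frac1d\nabla K_d(n(t))$, and for all $t\in(t_0,T)$: (i) $\sum_{j}\frac{\partial K_d}{\partial r_j}(n(t))\,\bigl(\dot n_j(t)-b_j(t)\bigr)=0$ (i.e. $\dot n=b+n_\perp$ with $n_\perp\cdot\nabla K_d(n)=0$, using the bilinear dot product); (ii) for each $j=1,\dots,d^2-1$, $$\sum_l\frac{\partial^2K_d}{\partial r_j\partial r_l}(n(t))\,\dot n_l(t)=-b_j(t)K_d(n(t))+\sqrt{\tfrac d2}\sum_{k,m}\bigl(f_{kmj}-i\,d_{kmj}\bigr)b_k(t)\frac{\partial K_d}{\partial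 r_m}(n(t)).$$
   Context: $\Lambda=(\Lambda_1,\dots,\Lambda_{d^2-1})$ are traceless Hermitian generators of $SU(d)$ with $\mathrm{tr}(\Lambda_k\Lambda_m)=2\delta_{km}$ and $\Lambda_k\Lambda_m=\frac2d\delta_{km}\mathbb{I}+\sum_j(d_{kmj}+i f_{kmj})\Lambda_j$ with real structure constants $d_{kmj}$ (symmetric), $f_{kmj}$ (antisymmetric). $r\cdot\Lambda=\sum_jr_j\Lambda_j$. $K_d(r):=\mathrm{tr}\exp\{-i\sqrt{d/2}(r\cdot\Lambda)\}$ for $r\in\mathbb{R}^{d^2-1}$. $U_H(t,t_0)$ is the solution of $i\frac{d}{dt}U_H(t,t_0)=H(t)U_H(t,t_0)$, $U_H(t_0,t_0)=\mathbb{I}$. *)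

theory Defs
  imports "HOL-Analysis.Analysis" "Jordan_Normal_Form.Matrix"
begin

text \<open>Vectors in R^(d^2-1) are functions nat => real, only indices 0..<d^2-1 matter
(the paper's index j = 1..d^2-1 corresponds to j-1 here).\<close>

definition mtrace :: "complex mat \<Rightarrow> complex" where
  "mtrace A = (\<Sum>i<dim_row A. A $$ (i,i))"

definition hermitian_mat :: "nat \<Rightarrow> complex mat \<Rightarrow> bool" where
  "hermitian_mat d A \<longleftrightarrow> A \<in> carrier_mat d d \<and>
     (\<forall>a<d. \<forall>c<d. A $$ (a,c) = cnj (A $$ (c,a)))"

definition mexp :: "nat \<Rightarrow> complex mat \<Rightarrow> complex mat" where
  "mexp d A = mat d d (\<lambda>(a,c). \<Sum>k. (A ^\<^sub>m k) $$ (a,c) / of_nat (fact k))"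

definition lincomb :: "nat \<Rightarrow> nat \<Rightarrow> (nat \<Rightarrow> complex) \<Rightarrow> (nat \<Rightarrow> complex mat) \<Rightarrow> complex mat" where
  "lincomb d N r L = mat d d (\<lambda>(a,c). \<Sum>j<N. r j * L j $$ (a,c))"

definition Kd :: "nat \<Rightarrow> (nat \<Rightarrow> complex mat) \<Rightarrow> (nat \<Rightarrow> real) \<Rightarrow> complex" where
  "Kd d L r = mtrace (mexp d ((- \<i> * complex_of_real (sqrt (real d / 2))) \<cdot>\<^sub>m
       lincomb d (d\<^sup>2 - 1) (\<lambda>j. complex_of_real (r j)) L))"

definition pderiv_j :: "nat \<Rightarrow> ((nat \<Rightarrow> real) \<Rightarrow> complex) \<Rightarrow> (nat \<Rightarrow> real) \<Rightarrow> complex" where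
  "pderiv_j j F r = vector_derivative (\<lambda>s. F (r(j := s))) (at (r j))"

definition su_generators ::
  "nat \<Rightarrow> (nat \<Rightarrow> complex mat) \<Rightarrow> (nat \<Rightarrow> nat \<Rightarrow> nat \<Rightarrow> real) \<Rightarrow> (nat \<Rightarrow> nat \<Rightarrow> nat \<Rightarrow> real) \<Rightarrow> bool" where
  "su_generators d L dd ff \<longleftrightarrow>
     (\<forall>k < d\<^sup>2 - 1. hermitian_mat d (L k) \<and> mtrace (L k) = 0) \<and>
     (\<forall>k < d\<^sup>2 - 1. \<forall>m < d\<^sup>2 - 1. mtrace (L k * L m) = (if k = m then 2 else 0)) \<and>
     (\<forall>k < d\<^sup>2 - 1. \<forall>m < d\<^sup>2 - 1.
        L k * L m = (if k = m then complex_of_real (2 / real d) else 0) \<cdot>\<^sub>m 1\<^sub>m d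
                    + lincomb d (d\<^sup>2 - 1) (\<lambda>j. complex_of_real (dd k m j) + \<i> * complex_of_real (ff k m j)) L) \<and>
     (\<forall>k m j. dd k m j = dd m k j \<and> ff k m j = - ff m k j)"

end

theory Submission imports Defs begin

text \<open>Removing the scalar phase from \<open>U\<^sub>H\<close> leaves \<open>W(t) = exp(-i\<surd>(d/2) n(t)\<cdot>\<Lambda>)\<close>, which can
  be differentiated in two ways: from the Schroedinger equation, \<open>W' = -i\<surd>(d/2) (b\<cdot>\<Lambda>) W\<close>, and by
  the chain rule through the exponential, where the derivative of \<open>tr(P e\<^sup>X)\<close> in direction \<open>Q\<close> is a
  Duhamel pairing that is symmetric in \<open>P, Q\<close> and equals \<open>tr(Q e\<^sup>X)\<close> for \<open>P = 1\<close>.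
  Since \<open>K\<^sub>d(n) = tr W\<close> and \<open>\<partial>\<^sub>jK\<^sub>d(n) = -i\<surd>(d/2) tr(\<Lambda>\<^sub>j W)\<close>, the Schroedinger description, the product rule
  for the generators and the cyclic symmetry of the structure constants (from cyclicity of the trace)
  show that \<open>(K\<^sub>d(n), \<nabla>K\<^sub>d(n))/d\<close> solves the Cauchy problem; uniqueness is a Gronwall estimate for
  this linear system. Equating the two derivatives of \<open>tr(P W)\<close> for \<open>P = 1\<close> and \<open>P = \<Lambda>\<^sub>j\<close> gives
  (i) and (ii).\<close>

section \<open>Traces of matrix products\<close>

lemma index_mult_mat_sum:
  "A \<in> carrier_mat n m \<Longrightarrow> B \<in> carrier_mat m k \<Longrightarrow> i < n \<Longrightarrow> j < k \<Longrightarrow>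
   (A * B) $$ (i,j) = (\<Sum>l<m. A $$ (i,l) * B $$ (l,j))"
  by (auto simp: index_mult_mat scalar_prod_def atLeast0LessThan intro!: sum.cong)

declare index_mult_mat(1)[simp del]

lemma mult_carrier_mat_square[simp]:
  "A \<in> carrier_mat n n \<Longrightarrow> B \<in> carrier_mat n n \<Longrightarrow> A * B \<in> carrier_mat n n"
  by (rule mult_carrier_mat)

lemma mtrace_carrier_mat: "A \<in> carrier_mat n n \<Longrightarrow> mtrace A = (\<Sum>i<n. A $$ (i,i))"
  by (simp add: mtrace_def)

lemma mtrace_mult_sum:
  "P \<in> carrier_mat d d \<Longrightarrow> X \<in> carrier_mat d d \<Longrightarrow>
   mtrace (P * X) = (\<Sum>a<d. \<Sum>b<d. P $$ (a,b) * X $$ (b,a))"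
  by (auto simp: mtrace_carrier_mat[of _ d] intro!: sum.cong index_mult_mat_sum)

lemma mtrace_mult_comm:
  assumes "A \<in> carrier_mat n m" "B \<in> carrier_mat m n"
  shows "mtrace (A * B) = mtrace (B * A)"
proof -
  have "mtrace (A * B) = (\<Sum>i<n. \<Sum>l<m. A $$ (i,l) * B $$ (l,i))"
    using assms by (subst mtrace_carrier_mat[of _ n]) (auto intro!: sum.cong index_mult_mat_sum)
  also have "\<dots> = (\<Sum>l<m. \<Sum>i<n. B $$ (l,i) * A $$ (i,l))"
    by (subst sum.swap) (simp add: mult.commute)
  also have "\<dots> = mtrace (B * A)"
    using assms by (subst mtrace_carrier_mat[of _ m]) (auto intro!: sum.cong index_mult_mat_sum[symmetric])
  finally show ?thesis .
qed

lemma mtrace_add: "A \<in> carrier_mat n n \<Longrightarrow> B \<in> carrier_mat n n \<Longrightarrow> mtrace (A + B) = mtrace A + mtrace B"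
  by (simp add: mtrace_def sum.distrib)

lemma mtrace_smult: "A \<in> carrier_mat n n \<Longrightarrow> mtrace (c \<cdot>\<^sub>m A) = c * mtrace A"
  by (simp add: mtrace_def sum_distrib_left)

lemma mtrace_one: "mtrace (1\<^sub>m n) = of_nat n"
  by (simp add: mtrace_def)

lemma mtrace_zero: "mtrace (0\<^sub>m n n) = 0"
  by (simp add: mtrace_def)

lemma mtrace_mult3:
  assumes "A \<in> carrier_mat n n" "M \<in> carrier_mat n n" "B \<in> carrier_mat n n"
  shows "mtrace (A * M * B) = (\<Sum>i<n. \<Sum>j<n. \<Sum>k<n. A $$ (i,j) * M $$ (j,k) * B $$ (k,i))"
proof -
  have AM: "A * M \<in> carrier_mat n n" using assms by simp
  have "mtrace (A * M * B) = (\<Sum>i<n. \<Sum>k<n. (A * M) $$ (i,k) * B $$ (k,i))"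
    unfolding mtrace_carrier_mat[OF mult_carrier_mat[OF AM assms(3)]]
    by (rule sum.cong[OF refl], rule index_mult_mat_sum[OF AM assms(3)], auto)
  also have "\<dots> = (\<Sum>i<n. \<Sum>k<n. \<Sum>j<n. A $$ (i,j) * M $$ (j,k) * B $$ (k,i))"
    using assms by (auto intro!: sum.cong simp: index_mult_mat_sum[of A n n M n] sum_distrib_right)
  also have "\<dots> = (\<Sum>i<n. \<Sum>j<n. \<Sum>k<n. A $$ (i,j) * M $$ (j,k) * B $$ (k,i))"
    by (intro sum.cong refl sum.swap)
  finally show ?thesis .
qed

lemma lincomb_carrier_mat[simp]: "lincomb d N r L \<in> carrier_mat d d"
  by (simp add: lincomb_def)

lemma lincomb_entry: "i < d \<Longrightarrow> j < d \<Longrightarrow> lincomb d N r L $$ (i,j) = (\<Sum>l<N. r l * L l $$ (i,j))"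
  by (simp add: lincomb_def)

lemma mtrace_mult_lincomb_mult:
  assumes "A \<in> carrier_mat d d" "B \<in> carrier_mat d d" "\<forall>l<N. L l \<in> carrier_mat d d"
  shows "mtrace (A * lincomb d N r L * B) = (\<Sum>l<N. r l * mtrace (A * L l * B))"
proof -
  have "mtrace (A * lincomb d N r L * B)
      = (\<Sum>i<d. \<Sum>j<d. \<Sum>k<d. \<Sum>l<N. r l * (A $$ (i,j) * L l $$ (j,k) * B $$ (k,i)))"
    using assms by (simp add: mtrace_mult3 lincomb_entry sum_distrib_left sum_distrib_right mult_ac)
  also have "\<dots> = (\<Sum>l<N. \<Sum>i<d. \<Sum>j<d. \<Sum>k<d. r l * (A $$ (i,j) * L l $$ (j,k) * B $$ (k,i)))"
    by (simp only: sum.swap[where B="{..<N}"])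
  also have "\<dots> = (\<Sum>l<N. r l * mtrace (A * L l * B))"
    using assms by (auto intro!: sum.cong simp: mtrace_mult3 sum_distrib_left)
  finally show ?thesis .
qed

lemma mtrace_lincomb_mult:
  assumes "B \<in> carrier_mat d d" "\<forall>l<N. L l \<in> carrier_mat d d"
  shows "mtrace (lincomb d N r L * B) = (\<Sum>l<N. r l * mtrace (L l * B))"
proof -
  have "mtrace (1\<^sub>m d * lincomb d N r L * B) = (\<Sum>l<N. r l * mtrace (1\<^sub>m d * L l * B))"
    by (rule mtrace_mult_lincomb_mult[OF one_carrier_mat assms])
  moreover have "(\<Sum>l<N. r l * mtrace (1\<^sub>m d * L l * B)) = (\<Sum>l<N. r l * mtrace (L l * B))"
    using assms by (intro sum.cong refl) (simp add: left_mult_one_mat[of _ d d])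
  ultimately show ?thesis
    using left_mult_one_mat[OF lincomb_carrier_mat] by simp
qed

lemma mtrace_mult_smult_mult:
  assumes "A \<in> carrier_mat d d" "Q \<in> carrier_mat d d" "B \<in> carrier_mat d d"
  shows "mtrace (A * (c \<cdot>\<^sub>m Q) * B) = c * mtrace (A * Q * B)"
  using assms by (simp only: mtrace_mult3 smult_carrier_mat) (simp add: sum_distrib_left mult_ac)

lemma pow_mat_add:
  "(X :: 'a :: semiring_1 mat) \<in> carrier_mat d d \<Longrightarrow> X ^\<^sub>m p * X ^\<^sub>m q = X ^\<^sub>m (p + q)"
  by (induction q) (simp_all add: assoc_mult_mat[of _ d d _ d _ d, symmetric])


section \<open>The matrix exponential\<close>

definition mnorm :: "nat \<Rightarrow> complex mat \<Rightarrow> real" where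
  "mnorm d X = (\<Sum>a<d. \<Sum>c<d. cmod (X $$ (a,c)))"

lemma mnorm_nonneg: "0 \<le> mnorm d X"
  by (simp add: mnorm_def sum_nonneg)

lemma row_norm_le_mnorm: "a < d \<Longrightarrow> (\<Sum>c<d. cmod (X $$ (a,c))) \<le> mnorm d X"
  unfolding mnorm_def
  by (intro member_le_sum[where f="\<lambda>a. \<Sum>c<d. cmod (X $$ (a,c))"]) (auto intro: sum_nonneg)

lemma entry_norm_le_mnorm: "a < d \<Longrightarrow> c < d \<Longrightarrow> cmod (X $$ (a,c)) \<le> mnorm d X"
  using member_le_sum[of c "{..<d}" "\<lambda>c. cmod (X $$ (a,c))"] row_norm_le_mnorm[of a d X] by auto

lemma mnorm_mult:
  assumes "X \<in> carrier_mat d d" "Y \<in> carrier_mat d d"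
  shows "mnorm d (X * Y) \<le> mnorm d X * mnorm d Y"
proof -
  have "mnorm d (X * Y) = (\<Sum>a<d. \<Sum>c<d. cmod (\<Sum>b<d. X $$ (a,b) * Y $$ (b,c)))"
    unfolding mnorm_def using assms by (auto intro!: sum.cong simp: index_mult_mat_sum)
  also have "\<dots> \<le> (\<Sum>a<d. \<Sum>c<d. \<Sum>b<d. cmod (X $$ (a,b)) * cmod (Y $$ (b,c)))"
    by (intro sum_mono order_trans[OF norm_sum]) (simp add: norm_mult)
  also have "\<dots> = (\<Sum>a<d. \<Sum>b<d. cmod (X $$ (a,b)) * (\<Sum>c<d. cmod (Y $$ (b,c))))"
    by (simp only: sum_distrib_left mult.assoc, rule sum.cong[OF refl], rule sum.swap)
  also have "\<dots> \<le> (\<Sum>a<d. \<Sum>b<d. cmod (X $$ (a,b)) * mnorm d Y)"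
    by (intro sum_mono mult_left_mono row_norm_le_mnorm) auto
  also have "\<dots> = mnorm d X * mnorm d Y"
    by (simp add: mnorm_def sum_distrib_right)
  finally show ?thesis .
qed

lemma norm_mtrace_le_mnorm:
  assumes "X \<in> carrier_mat d d"
  shows "cmod (mtrace X) \<le> mnorm d X"
proof -
  have "cmod (mtrace X) \<le> (\<Sum>i<d. cmod (X $$ (i,i)))"
    using assms by (simp add: mtrace_carrier_mat norm_sum)
  also have "\<dots> \<le> mnorm d X"
    unfolding mnorm_def by (intro sum_mono member_le_sum) auto
  finally show ?thesis .
qed

lemma mnorm_one: "mnorm d (1\<^sub>m d) = real d"
proof -
  have "(\<Sum>c<d. cmod ((1\<^sub>m d :: complex mat) $$ (a,c))) = 1" if "a < d" for a
    using that by (simp add: if_distrib cong: if_cong)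
  then show ?thesis by (simp add: mnorm_def)
qed

lemma mnorm_pow:
  assumes "X \<in> carrier_mat d d"
  shows "mnorm d (X ^\<^sub>m k) \<le> (real d + 1) * mnorm d X ^ k"
proof (induction k)
  case 0
  then show ?case using assms by (simp add: mnorm_one)
next
  case (Suc k)
  have "mnorm d (X ^\<^sub>m Suc k) \<le> mnorm d (X ^\<^sub>m k) * mnorm d X"
    using assms by (simp add: mnorm_mult)
  also have "\<dots> \<le> (real d + 1) * mnorm d X ^ k * mnorm d X"
    using Suc mnorm_nonneg by (intro mult_right_mono) auto
  finally show ?case by (simp add: mult_ac)
qed

lemma mnorm_smult: "X \<in> carrier_mat d d \<Longrightarrow> mnorm d (c \<cdot>\<^sub>m X) = cmod c * mnorm d X"
  unfolding mnorm_def by (auto simp: norm_mult sum_distrib_left intro!: sum.cong)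

lemma mnorm_lincomb:
  assumes "\<forall>l<N. L l \<in> carrier_mat d d"
  shows "mnorm d (lincomb d N r L) \<le> (\<Sum>l<N. cmod (r l) * mnorm d (L l))"
proof -
  have "mnorm d (lincomb d N r L) = (\<Sum>a<d. \<Sum>c<d. cmod (\<Sum>l<N. r l * L l $$ (a,c)))"
    unfolding mnorm_def by (auto intro!: sum.cong simp: lincomb_entry)
  also have "\<dots> \<le> (\<Sum>a<d. \<Sum>c<d. \<Sum>l<N. cmod (r l) * cmod (L l $$ (a,c)))"
    by (intro sum_mono order_trans[OF norm_sum]) (simp add: norm_mult)
  also have "\<dots> = (\<Sum>l<N. cmod (r l) * mnorm d (L l))"
    by (simp add: mnorm_def sum_distrib_left sum.swap[where B="{..<N}"])
  finally show ?thesis .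
qed

lemma mnorm_mult_pow_mult_pow_le:
  assumes "P \<in> carrier_mat d d" "X \<in> carrier_mat d d" "Q \<in> carrier_mat d d" "mnorm d X \<le> R"
  shows "mnorm d (P * (X ^\<^sub>m p * (Q * X ^\<^sub>m q))) \<le> mnorm d P * mnorm d Q * (real d + 1)^2 * R ^ (p + q)"
proof -
  have pow: "mnorm d (X ^\<^sub>m m) \<le> (real d + 1) * R ^ m" for m
    using mnorm_pow[OF assms(2), of m] power_mono[OF assms(4) mnorm_nonneg, of m]
    by (meson add_nonneg_nonneg mult_left_mono of_nat_0_le_iff order_trans zero_le_one)
  have "mnorm d (P * (X ^\<^sub>m p * (Q * X ^\<^sub>m q)))
      \<le> mnorm d P * (mnorm d (X ^\<^sub>m p) * (mnorm d Q * mnorm d (X ^\<^sub>m q)))"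
    using assms mnorm_mult[of _ d] mnorm_nonneg[of d]
    by (meson mult_carrier_mat pow_carrier_mat mult_left_mono order_trans)
  also have "\<dots> \<le> mnorm d P * (((real d + 1) * R ^ p) * (mnorm d Q * ((real d + 1) * R ^ q)))"
    using pow mnorm_nonneg assms(4) order_trans[OF mnorm_nonneg assms(4)]
    by (intro mult_left_mono mult_mono mult_nonneg_nonneg) auto
  also have "\<dots> = mnorm d P * mnorm d Q * (real d + 1)^2 * R ^ (p + q)"
    by (simp add: power_add power2_eq_square mult_ac)
  finally show ?thesis .
qed


lemma mexp_entry:
  "a < d \<Longrightarrow> c < d \<Longrightarrow> mexp d X $$ (a,c) = (\<Sum>k. (X ^\<^sub>m k) $$ (a,c) / of_nat (fact k))"
  by (simp add: mexp_def)

lemma mexp_carrier_mat[simp]: "mexp d X \<in> carrier_mat d d"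
  by (simp add: mexp_def)

lemma summable_scaled_exp_series: "summable (\<lambda>k. C * x ^ k / fact k :: real)"
  using summable_mult[OF summable_exp_generic[of x], of C] by (simp add: field_simps)

lemma mexp_entry_sums:
  assumes "X \<in> carrier_mat d d" "a < d" "c < d"
  shows "(\<lambda>k. (X ^\<^sub>m k) $$ (a,c) / of_nat (fact k)) sums (mexp d X $$ (a,c))"
proof -
  have "norm ((X ^\<^sub>m k) $$ (a,c) / of_nat (fact k)) \<le> (real d + 1) * mnorm d X ^ k / fact k" for k
    using order_trans[OF entry_norm_le_mnorm[OF assms(2,3)] mnorm_pow[OF assms(1)]]
    by (simp add: norm_divide divide_right_mono)
  then have "summable (\<lambda>k. (X ^\<^sub>m k) $$ (a,c) / of_nat (fact k))"
    by (intro summable_comparison_test[OF _ summable_scaled_exp_series]) auto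
  then show ?thesis using assms by (simp add: mexp_entry summable_sums)
qed

lemma mtrace_mult_mexp_sums:
  assumes "X \<in> carrier_mat d d" "P \<in> carrier_mat d d"
  shows "(\<lambda>k. mtrace (P * X ^\<^sub>m k) / of_nat (fact k)) sums mtrace (P * mexp d X)"
proof -
  have "(\<lambda>k. \<Sum>a<d. \<Sum>b<d. P $$ (a,b) * ((X ^\<^sub>m k) $$ (b,a) / of_nat (fact k)))
        sums (\<Sum>a<d. \<Sum>b<d. P $$ (a,b) * mexp d X $$ (b,a))"
    using assms by (intro sums_sum sums_mult mexp_entry_sums) auto
  then show ?thesis
    using assms by (simp add: mtrace_mult_sum sum_divide_distrib)
qed


section \<open>Differentiating traces of exponentials\<close>

lemma has_vector_derivative_divide_const:
  fixes f :: "real \<Rightarrow> 'a::real_normed_field"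
  assumes "(f has_vector_derivative f') F"
  shows "((\<lambda>x. f x / c) has_vector_derivative f' / c) F"
  using has_vector_derivative_mult_left[OF assms, of "inverse c"] by (simp add: divide_inverse)

lemma has_vector_derivative_series:
  fixes f f' :: "nat \<Rightarrow> real \<Rightarrow> 'a::banach"
  assumes S: "convex S" "x \<in> S"
    and f': "\<And>n s. s \<in> S \<Longrightarrow> (f n has_vector_derivative f' n s) (at s within S)"
    and M: "\<And>n s. s \<in> S \<Longrightarrow> norm (f' n s) \<le> M n" "summable M"
    and g: "\<And>s. s \<in> S \<Longrightarrow> (\<lambda>n. f n s) sums g s"
  shows "(g has_vector_derivative (\<Sum>n. f' n x)) (at x within S)"
proof -
  define G where "G = (\<lambda>s. \<Sum>n. f' n s)"
  have ul: "uniform_limit S (\<lambda>n s. \<Sum>i<n. f' i s) G sequentially"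
    unfolding G_def by (rule Weierstrass_m_test[OF M])
  have "\<exists>h. \<forall>s\<in>S. (\<lambda>n. f n s) sums h s \<and> (h has_derivative (\<lambda>t. t *\<^sub>R G s)) (at s within S)"
  proof (rule has_derivative_series[OF S(1), where f'="\<lambda>n s t. t *\<^sub>R f' n s"])
    show "\<And>n s. s \<in> S \<Longrightarrow> (f n has_derivative (\<lambda>t. t *\<^sub>R f' n s)) (at s within S)"
      using f' by (simp add: has_vector_derivative_def)
    show "\<forall>\<^sub>F n in sequentially. \<forall>s\<in>S. \<forall>t. norm ((\<Sum>i<n. t *\<^sub>R f' i s) - t *\<^sub>R G s) \<le> e * norm t"
      if "0 < e" for e
    proof -
      have "\<forall>\<^sub>F n in sequentially. \<forall>s\<in>S. dist (\<Sum>i<n. f' i s) (G s) < e"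
        using ul that unfolding uniform_limit_iff by blast
      moreover have "norm ((\<Sum>i<n. t *\<^sub>R f' i s) - t *\<^sub>R G s) \<le> e * norm t"
        if "dist (\<Sum>i<n. f' i s) (G s) < e" for n s t
      proof -
        have "norm ((\<Sum>i<n. t *\<^sub>R f' i s) - t *\<^sub>R G s) = \<bar>t\<bar> * dist (\<Sum>i<n. f' i s) (G s)"
          by (simp add: scaleR_sum_right[symmetric] scaleR_diff_right[symmetric] dist_norm)
        also have "\<dots> \<le> \<bar>t\<bar> * e"
          using that by (intro mult_left_mono) auto
        finally show ?thesis by (simp add: mult.commute)
      qed
      ultimately show ?thesis
        by (elim eventually_mono) blast
    qed
  qed (use S g in auto)
  then obtain h where h: "\<And>s. s \<in> S \<Longrightarrow> (\<lambda>n. f n s) sums h s \<and> (h has_derivative (\<lambda>t. t *\<^sub>R G s)) (at s within S)"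
    by blast
  have "g s = h s" if "s \<in> S" for s
    using sums_unique2 g[OF that] h[OF that] by blast
  then have "(g has_derivative (\<lambda>t. t *\<^sub>R G x)) (at x within S)"
    using h S(2) by (intro has_derivative_transform[of x S g h]) auto
  then show ?thesis unfolding has_vector_derivative_def G_def .
qed

definition has_mat_derivative ::
  "nat \<Rightarrow> (real \<Rightarrow> complex mat) \<Rightarrow> complex mat \<Rightarrow> real \<Rightarrow> real set \<Rightarrow> bool" where
  "has_mat_derivative d X X' x S \<longleftrightarrow>
     (\<forall>a<d. \<forall>c<d. ((\<lambda>s. X s $$ (a,c)) has_vector_derivative X' $$ (a,c)) (at x within S))"

lemma has_mat_derivative_const: "has_mat_derivative d (\<lambda>s. C) (0\<^sub>m d d) x S"
  unfolding has_mat_derivative_def by (auto intro: has_vector_derivative_const)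

lemma has_mat_derivative_mult:
  assumes XC: "\<And>s. X s \<in> carrier_mat d d" and YC: "\<And>s. Y s \<in> carrier_mat d d"
    and X'C: "X' \<in> carrier_mat d d" and Y'C: "Y' \<in> carrier_mat d d"
    and DX: "has_mat_derivative d X X' x S" and DY: "has_mat_derivative d Y Y' x S"
  shows "has_mat_derivative d (\<lambda>s. X s * Y s) (X' * Y x + X x * Y') x S"
  unfolding has_mat_derivative_def
proof (intro allI impI)
  fix a c assume a: "a < d" and c: "c < d"
  have "((\<lambda>s. \<Sum>b<d. X s $$ (a,b) * Y s $$ (b,c)) has_vector_derivative
        (\<Sum>b<d. X x $$ (a,b) * Y' $$ (b,c) + X' $$ (a,b) * Y x $$ (b,c))) (at x within S)"
    using DX DY a c unfolding has_mat_derivative_def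
    by (intro has_vector_derivative_sum has_vector_derivative_mult) auto
  moreover have "(\<Sum>b<d. X x $$ (a,b) * Y' $$ (b,c) + X' $$ (a,b) * Y x $$ (b,c))
      = (X' * Y x + X x * Y') $$ (a,c)"
    using a c X'C YC[of x] XC[of x] Y'C
    by (simp add: index_mult_mat_sum[of _ d d _ d] sum.distrib add.commute)
  moreover have "(\<lambda>s. (X s * Y s) $$ (a,c)) = (\<lambda>s. \<Sum>b<d. X s $$ (a,b) * Y s $$ (b,c))"
    using XC YC a c by (auto intro!: index_mult_mat_sum)
  ultimately show "((\<lambda>s. (X s * Y s) $$ (a,c)) has_vector_derivative (X' * Y x + X x * Y') $$ (a,c))
      (at x within S)"
    by simp
qed

text \<open>\<open>pow_mat_deriv d X Q k = \<Sum>\<^sub>p\<^sub><\<^sub>k X\<^sup>p Q X\<^sup>k\<^sup>-\<^sup>1\<^sup>-\<^sup>p\<close>, the derivative of \<open>X\<^sup>k\<close> in direction \<open>Q\<close>;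
  it is defined by recursion because matrices of this library carry their dimension and so do not
  form an additive monoid.\<close>

fun pow_mat_deriv :: "nat \<Rightarrow> complex mat \<Rightarrow> complex mat \<Rightarrow> nat \<Rightarrow> complex mat" where
  "pow_mat_deriv d X Q 0 = 0\<^sub>m d d"
| "pow_mat_deriv d X Q (Suc k) = pow_mat_deriv d X Q k * X + X ^\<^sub>m k * Q"

lemma pow_mat_deriv_carrier_mat[simp]:
  "X \<in> carrier_mat d d \<Longrightarrow> Q \<in> carrier_mat d d \<Longrightarrow> pow_mat_deriv d X Q k \<in> carrier_mat d d"
  by (induction k) auto

lemma has_mat_derivative_pow:
  assumes XC: "\<And>s. X s \<in> carrier_mat d d" and X'C: "X' \<in> carrier_mat d d"
    and DX: "has_mat_derivative d X X' x S"
  shows "has_mat_derivative d (\<lambda>s. X s ^\<^sub>m k) (pow_mat_deriv d (X x) X' k) x S"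
proof (induction k)
  case 0
  have "(\<lambda>s. X s ^\<^sub>m 0) = (\<lambda>s. 1\<^sub>m d)"
    by (rule ext) (simp add: carrier_matD(1)[OF XC])
  then show ?case using has_mat_derivative_const[of d "1\<^sub>m d" x S] by simp
next
  case (Suc k)
  show ?case
    using has_mat_derivative_mult[OF _ XC _ X'C Suc DX] XC X'C by simp
qed

lemma mtrace_mult_has_vector_derivative:
  assumes PC: "P \<in> carrier_mat d d" and MC: "\<And>s. M s \<in> carrier_mat d d"
    and M'C: "M' \<in> carrier_mat d d" and DM: "has_mat_derivative d M M' x S"
  shows "((\<lambda>s. mtrace (P * M s)) has_vector_derivative mtrace (P * M')) (at x within S)"
proof -
  have "((\<lambda>s. \<Sum>a<d. \<Sum>b<d. P $$ (a,b) * M s $$ (b,a)) has_vector_derivative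
         (\<Sum>a<d. \<Sum>b<d. P $$ (a,b) * M' $$ (b,a))) (at x within S)"
    using DM unfolding has_mat_derivative_def
    by (intro has_vector_derivative_sum has_vector_derivative_mult_right) auto
  then show ?thesis using PC MC M'C by (simp add: mtrace_mult_sum)
qed

definition duhamel_term :: "nat \<Rightarrow> complex mat \<Rightarrow> complex mat \<Rightarrow> complex mat \<Rightarrow> nat \<Rightarrow> complex" where
  "duhamel_term d P Q X k = (\<Sum>p<k. mtrace (P * (X ^\<^sub>m p * (Q * X ^\<^sub>m (k - Suc p)))))"

text \<open>\<open>duhamel d P Q X = tr (P \<cdot> D exp(X)[Q])\<close>, the directional derivative of the
  exponential at \<open>X\<close> in direction \<open>Q\<close> paired with \<open>P\<close>.\<close>

definition duhamel :: "nat \<Rightarrow> complex mat \<Rightarrow> complex mat \<Rightarrow> complex mat \<Rightarrow> complex" where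
  "duhamel d P Q X = (\<Sum>k. duhamel_term d P Q X k / of_nat (fact k))"

lemma mtrace_pow_mat_deriv_mult:
  assumes XC: "X \<in> carrier_mat d d" and QC: "Q \<in> carrier_mat d d" and PC: "P \<in> carrier_mat d d"
  shows "R \<in> carrier_mat d d \<Longrightarrow> mtrace (P * (pow_mat_deriv d X Q k * R)) =
     (\<Sum>p<k. mtrace (P * (X ^\<^sub>m p * (Q * (X ^\<^sub>m (k - Suc p) * R)))))"
proof (induction k arbitrary: R)
  case 0
  then show ?case using PC by (simp add: mtrace_zero)
next
  case (Suc k)
  have RC: "R \<in> carrier_mat d d" by fact
  have "pow_mat_deriv d X Q (Suc k) * R = pow_mat_deriv d X Q k * X * R + X ^\<^sub>m k * Q * R"
    using XC QC RC by (simp del: assoc_mult_mat add: add_mult_distrib_mat[of _ d d _ _ d])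
  also have "\<dots> = pow_mat_deriv d X Q k * (X * R) + X ^\<^sub>m k * (Q * R)"
    using XC QC RC by (simp add: assoc_mult_mat[of _ d d _ d _ d])
  finally have "mtrace (P * (pow_mat_deriv d X Q (Suc k) * R)) =
      mtrace (P * (pow_mat_deriv d X Q k * (X * R))) + mtrace (P * (X ^\<^sub>m k * (Q * R)))"
    using XC QC RC PC by (simp add: mult_add_distrib_mat[of _ d d _ d] mtrace_add[of _ d])
  also have "mtrace (P * (pow_mat_deriv d X Q k * (X * R))) =
     (\<Sum>p<k. mtrace (P * (X ^\<^sub>m p * (Q * (X ^\<^sub>m (Suc k - Suc p) * R)))))"
  proof -
    have "X ^\<^sub>m (k - Suc p) * (X * R) = X ^\<^sub>m (Suc k - Suc p) * R" if "p < k" for p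
    proof -
      have "Suc k - Suc p = Suc (k - Suc p)" using that by arith
      then have "X ^\<^sub>m (Suc k - Suc p) * R = X ^\<^sub>m (k - Suc p) * X * R"
        by (simp only: pow_mat.simps)
      then show ?thesis using XC RC by (simp add: assoc_mult_mat[of _ d d _ d _ d])
    qed
    then show ?thesis
      using Suc.IH[of "X * R"] XC RC by simp
  qed
  finally show ?case using RC XC by (simp add: add.commute)
qed

lemma mtrace_pow_mat_deriv:
  assumes "X \<in> carrier_mat d d" "Q \<in> carrier_mat d d" "P \<in> carrier_mat d d"
  shows "mtrace (P * pow_mat_deriv d X Q k) = duhamel_term d P Q X k"
  using mtrace_pow_mat_deriv_mult[OF assms one_carrier_mat, of k] assms
  by (simp add: duhamel_term_def right_mult_one_mat[of _ d d])

lemma norm_duhamel_term_le: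
  assumes PC: "P \<in> carrier_mat d d" and XC: "X \<in> carrier_mat d d" and QC: "Q \<in> carrier_mat d d"
    and XR: "mnorm d X \<le> R"
  shows "cmod (duhamel_term d P Q X k) \<le> mnorm d P * mnorm d Q * (real d + 1)^2 * (real k * R ^ (k - 1))"
proof -
  have "cmod (mtrace (P * (X ^\<^sub>m p * (Q * X ^\<^sub>m (k - Suc p)))))
          \<le> mnorm d P * mnorm d Q * (real d + 1)^2 * R ^ (k - 1)" if "p < k" for p
  proof -
    have "p + (k - Suc p) = k - 1" using that by arith
    then show ?thesis
      using order_trans[OF norm_mtrace_le_mnorm mnorm_mult_pow_mult_pow_le[OF PC XC QC XR, of p "k - Suc p"]]
        PC XC QC by simp
  qed
  then have "cmod (duhamel_term d P Q X k) \<le> (\<Sum>p<k. mnorm d P * mnorm d Q * (real d + 1)^2 * R ^ (k - 1))"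
    unfolding duhamel_term_def by (intro order_trans[OF norm_sum] sum_mono) auto
  then show ?thesis by (simp add: mult_ac)
qed

lemma summable_exp_deriv_series: "summable (\<lambda>k. C * (real k * R ^ (k - 1) / fact k))"
proof -
  have "(\<lambda>m. C * (real (Suc m) * R ^ (Suc m - 1) / fact (Suc m))) = (\<lambda>m. C * R ^ m / fact m)"
    by (simp add: fact_Suc field_simps del: of_nat_Suc)
  then show ?thesis
    using summable_scaled_exp_series summable_Suc_iff[of "\<lambda>k. C * (real k * R ^ (k - 1) / fact k)"] by simp
qed

lemma mtrace_mexp_has_vector_derivative:
  assumes S: "convex S" "x \<in> S"
    and XC: "\<And>s. X s \<in> carrier_mat d d" and X'C: "\<And>s. X' s \<in> carrier_mat d d"
    and PC: "P \<in> carrier_mat d d"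
    and D: "\<And>s. s \<in> S \<Longrightarrow> has_mat_derivative d X (X' s) s S"
    and XR: "\<And>s. s \<in> S \<Longrightarrow> mnorm d (X s) \<le> R"
    and X'R: "\<And>s. s \<in> S \<Longrightarrow> mnorm d (X' s) \<le> R'"
  shows "((\<lambda>s. mtrace (P * mexp d (X s))) has_vector_derivative duhamel d P (X' x) (X x))
           (at x within S)"
  unfolding duhamel_def
proof (rule has_vector_derivative_series[OF S,
      where M="\<lambda>k. mnorm d P * R' * (real d + 1)^2 * (real k * R ^ (k - 1) / fact k)"])
  fix k s assume s: "s \<in> S"
  have "((\<lambda>s. mtrace (P * X s ^\<^sub>m k)) has_vector_derivative duhamel_term d P (X' s) (X s) k)
          (at s within S)"
    using mtrace_mult_has_vector_derivative[OF PC _ _ has_mat_derivative_pow[OF XC X'C D[OF s]]]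
      mtrace_pow_mat_deriv[OF XC X'C PC] XC X'C by simp
  then show "((\<lambda>s. mtrace (P * X s ^\<^sub>m k) / of_nat (fact k)) has_vector_derivative
      duhamel_term d P (X' s) (X s) k / of_nat (fact k)) (at s within S)"
    by (rule has_vector_derivative_divide_const)
  have "cmod (duhamel_term d P (X' s) (X s) k)
      \<le> mnorm d P * mnorm d (X' s) * (real d + 1)^2 * (real k * R ^ (k - 1))"
    by (rule norm_duhamel_term_le[OF PC XC X'C XR[OF s]])
  also have "\<dots> \<le> mnorm d P * R' * (real d + 1)^2 * (real k * R ^ (k - 1))"
    using X'R[OF s] order_trans[OF mnorm_nonneg XR[OF s]]
    by (intro mult_right_mono mult_left_mono mult_nonneg_nonneg mnorm_nonneg zero_le_power) auto
  finally show "norm (duhamel_term d P (X' s) (X s) k / of_nat (fact k))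
      \<le> mnorm d P * R' * (real d + 1)^2 * (real k * R ^ (k - 1) / fact k)"
    by (simp add: norm_divide divide_right_mono)
qed (use summable_exp_deriv_series mtrace_mult_mexp_sums[OF XC PC] in auto)


lemma duhamel_term_one:
  assumes XC: "X \<in> carrier_mat d d" and QC: "Q \<in> carrier_mat d d"
  shows "duhamel_term d (1\<^sub>m d) Q X k = of_nat k * mtrace (Q * X ^\<^sub>m (k - 1))"
proof -
  have "mtrace (1\<^sub>m d * (X ^\<^sub>m p * (Q * X ^\<^sub>m (k - Suc p)))) = mtrace (Q * X ^\<^sub>m (k - 1))"
    if "p < k" for p
  proof -
    have "mtrace (1\<^sub>m d * (X ^\<^sub>m p * (Q * X ^\<^sub>m (k - Suc p))))
        = mtrace ((Q * X ^\<^sub>m (k - Suc p)) * X ^\<^sub>m p)"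
      using XC QC by (simp add: left_mult_one_mat[of _ d d] mtrace_mult_comm[of _ d d])
    also have "\<dots> = mtrace (Q * X ^\<^sub>m (k - 1))"
      using that XC QC by (simp add: assoc_mult_mat[of _ d d _ d _ d] pow_mat_add)
    finally show ?thesis .
  qed
  then show ?thesis by (simp add: duhamel_term_def)
qed

lemma duhamel_term_swap:
  assumes XC: "X \<in> carrier_mat d d" and QC: "Q \<in> carrier_mat d d" and PC: "P \<in> carrier_mat d d"
  shows "duhamel_term d P Q X k = duhamel_term d Q P X k"
proof -
  define g where "g = (\<lambda>p. mtrace (Q * (X ^\<^sub>m p * (P * X ^\<^sub>m (k - Suc p)))))"
  have "mtrace (P * (X ^\<^sub>m p * (Q * X ^\<^sub>m (k - Suc p)))) = g (k - Suc p)" if "p < k" for p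
  proof -
    have "mtrace (P * (X ^\<^sub>m p * (Q * X ^\<^sub>m (k - Suc p))))
        = mtrace ((P * X ^\<^sub>m p) * (Q * X ^\<^sub>m (k - Suc p)))"
      using XC QC PC by (simp add: assoc_mult_mat[of _ d d _ d _ d])
    also have "\<dots> = mtrace ((Q * X ^\<^sub>m (k - Suc p)) * (P * X ^\<^sub>m p))"
      using XC QC PC by (intro mtrace_mult_comm[of _ d d]) auto
    also have "\<dots> = g (k - Suc p)"
      using that XC QC PC by (simp add: g_def Suc_diff_Suc assoc_mult_mat[of _ d d _ d _ d])
    finally show ?thesis .
  qed
  then have "duhamel_term d P Q X k = (\<Sum>p<k. g (k - Suc p))"
    by (simp add: duhamel_term_def)
  also have "\<dots> = (\<Sum>p<k. g p)" by (rule sum.nat_diff_reindex)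
  finally show ?thesis by (simp add: g_def duhamel_term_def)
qed

lemma duhamel_term_lincomb:
  assumes XC: "X \<in> carrier_mat d d" and PC: "P \<in> carrier_mat d d"
    and LC: "\<forall>l<N. L l \<in> carrier_mat d d"
  shows "duhamel_term d P (lincomb d N r L) X k = (\<Sum>l<N. r l * duhamel_term d P (L l) X k)"
proof -
  have "mtrace (P * (X ^\<^sub>m p * (lincomb d N r L * X ^\<^sub>m q))) =
      (\<Sum>l<N. r l * mtrace (P * (X ^\<^sub>m p * (L l * X ^\<^sub>m q))))" for p q
  proof -
    have "mtrace (P * (X ^\<^sub>m p * (lincomb d N r L * X ^\<^sub>m q))) =
          mtrace ((P * X ^\<^sub>m p) * lincomb d N r L * X ^\<^sub>m q)"
      using XC PC by (simp add: assoc_mult_mat[of _ d d _ d _ d])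
    also have "\<dots> = (\<Sum>l<N. r l * mtrace ((P * X ^\<^sub>m p) * L l * X ^\<^sub>m q))"
      using XC PC LC by (intro mtrace_mult_lincomb_mult) auto
    also have "\<dots> = (\<Sum>l<N. r l * mtrace (P * (X ^\<^sub>m p * (L l * X ^\<^sub>m q))))"
      using XC PC LC by (intro sum.cong refl) (simp add: assoc_mult_mat[of _ d d _ d _ d])
    finally show ?thesis .
  qed
  then show ?thesis
    by (simp add: duhamel_term_def sum_distrib_left sum.swap[where B="{..<N}"])
qed

lemma duhamel_term_smult:
  assumes XC: "X \<in> carrier_mat d d" and PC: "P \<in> carrier_mat d d" and QC: "Q \<in> carrier_mat d d"
  shows "duhamel_term d P (c \<cdot>\<^sub>m Q) X k = c * duhamel_term d P Q X k"
proof -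
  have "mtrace (P * (X ^\<^sub>m p * (c \<cdot>\<^sub>m Q * X ^\<^sub>m q))) = c * mtrace (P * (X ^\<^sub>m p * (Q * X ^\<^sub>m q)))"
    for p q
    using mtrace_mult_smult_mult[of "P * X ^\<^sub>m p" d Q "X ^\<^sub>m q" c] XC PC QC
    by (simp add: assoc_mult_mat[of _ d d _ d _ d])
  then show ?thesis by (simp add: duhamel_term_def sum_distrib_left)
qed

lemma summable_duhamel_term:
  assumes "X \<in> carrier_mat d d" "P \<in> carrier_mat d d" "Q \<in> carrier_mat d d"
  shows "summable (\<lambda>k. duhamel_term d P Q X k / of_nat (fact k))"
proof (rule summable_comparison_test[OF _ summable_exp_deriv_series])
  show "\<exists>N. \<forall>k\<ge>N. norm (duhamel_term d P Q X k / of_nat (fact k)) \<le>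
       mnorm d P * mnorm d Q * (real d + 1)\<^sup>2 * (real k * mnorm d X ^ (k - 1) / fact k)"
    using norm_duhamel_term_le[OF assms(2,1,3) order_refl]
    by (intro exI[of _ 0] allI impI) (simp add: norm_divide divide_right_mono)
qed

lemma duhamel_swap:
  "X \<in> carrier_mat d d \<Longrightarrow> Q \<in> carrier_mat d d \<Longrightarrow> P \<in> carrier_mat d d \<Longrightarrow>
   duhamel d P Q X = duhamel d Q P X"
  unfolding duhamel_def by (simp add: duhamel_term_swap)

lemma duhamel_smult:
  assumes "X \<in> carrier_mat d d" "P \<in> carrier_mat d d" "Q \<in> carrier_mat d d"
  shows "duhamel d P (c \<cdot>\<^sub>m Q) X = c * duhamel d P Q X"
  unfolding duhamel_def duhamel_term_smult[OF assms]
  using suminf_mult[OF summable_duhamel_term[OF assms], of c] by (simp add: mult_ac)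

lemma duhamel_lincomb:
  assumes XC: "X \<in> carrier_mat d d" and PC: "P \<in> carrier_mat d d"
    and LC: "\<forall>l<N. L l \<in> carrier_mat d d"
  shows "duhamel d P (lincomb d N r L) X = (\<Sum>l<N. r l * duhamel d P (L l) X)"
proof -
  have sum: "summable (\<lambda>k. duhamel_term d P (L l) X k / of_nat (fact k))" if "l < N" for l
    using LC XC PC that by (intro summable_duhamel_term) auto
  have "duhamel d P (lincomb d N r L) X
      = (\<Sum>k. \<Sum>l<N. r l * (duhamel_term d P (L l) X k / of_nat (fact k)))"
    unfolding duhamel_def duhamel_term_lincomb[OF assms] by (simp add: sum_divide_distrib)
  also have "\<dots> = (\<Sum>l<N. \<Sum>k. r l * (duhamel_term d P (L l) X k / of_nat (fact k)))"
    using sum by (intro suminf_sum summable_mult) auto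
  also have "\<dots> = (\<Sum>l<N. r l * duhamel d P (L l) X)"
    unfolding duhamel_def using sum by (intro sum.cong refl suminf_mult) auto
  finally show ?thesis .
qed

lemma duhamel_one:
  assumes XC: "X \<in> carrier_mat d d" and QC: "Q \<in> carrier_mat d d"
  shows "duhamel d (1\<^sub>m d) Q X = mtrace (Q * mexp d X)"
proof -
  have "duhamel_term d (1\<^sub>m d) Q X (Suc k) / of_nat (fact (Suc k)) = mtrace (Q * X ^\<^sub>m k) / of_nat (fact k)"
    for k
  proof -
    have "(of_nat (fact (Suc k)) :: complex) = of_nat (Suc k) * of_nat (fact k)"
      by (simp only: fact_Suc of_nat_mult of_nat_id)
    moreover have nz: "(of_nat (Suc k) :: complex) \<noteq> 0"
      by (simp only: of_nat_eq_0_iff)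
    ultimately show ?thesis
      by (simp only: duhamel_term_one[OF XC QC] diff_Suc_1 mult_divide_mult_cancel_left[OF nz])
  qed
  then have "(\<lambda>k. duhamel_term d (1\<^sub>m d) Q X (Suc k) / of_nat (fact (Suc k))) sums mtrace (Q * mexp d X)"
    using mtrace_mult_mexp_sums[OF XC QC] by simp
  then have "(\<lambda>k. duhamel_term d (1\<^sub>m d) Q X k / of_nat (fact k)) sums
      (mtrace (Q * mexp d X) + duhamel_term d (1\<^sub>m d) Q X 0 / of_nat (fact 0))"
    by (rule iffD1[OF sums_Suc_iff])
  then have "(\<lambda>k. duhamel_term d (1\<^sub>m d) Q X k / of_nat (fact k)) sums mtrace (Q * mexp d X)"
    by (simp add: duhamel_term_def)
  then show ?thesis unfolding duhamel_def by (simp add: sums_iff)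
qed


definition scaled_lincomb ::
  "nat \<Rightarrow> nat \<Rightarrow> (nat \<Rightarrow> complex mat) \<Rightarrow> complex \<Rightarrow> (nat \<Rightarrow> real) \<Rightarrow> complex mat" where
  "scaled_lincomb d N L c r = c \<cdot>\<^sub>m lincomb d N (\<lambda>j. complex_of_real (r j)) L"

lemma scaled_lincomb_carrier_mat[simp]: "scaled_lincomb d N L c r \<in> carrier_mat d d"
  by (simp add: scaled_lincomb_def)

lemma scaled_lincomb_entry:
  "a < d \<Longrightarrow> b < d \<Longrightarrow>
   scaled_lincomb d N L c r $$ (a,b) = c * (\<Sum>l<N. complex_of_real (r l) * L l $$ (a,b))"
  by (simp add: scaled_lincomb_def lincomb_def)

lemma mnorm_scaled_lincomb_le:
  assumes LC: "\<forall>l<N. L l \<in> carrier_mat d d" and R: "\<And>l. l < N \<Longrightarrow> \<bar>r l\<bar> \<le> R"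
  shows "mnorm d (scaled_lincomb d N L c r) \<le> cmod c * (R * (\<Sum>l<N. mnorm d (L l)))"
proof -
  have "mnorm d (scaled_lincomb d N L c r) \<le> cmod c * (\<Sum>l<N. \<bar>r l\<bar> * mnorm d (L l))"
    unfolding scaled_lincomb_def mnorm_smult[OF lincomb_carrier_mat]
    using mnorm_lincomb[OF LC, of "\<lambda>j. complex_of_real (r j)"] by (intro mult_left_mono) auto
  also have "\<dots> \<le> cmod c * (R * (\<Sum>l<N. mnorm d (L l)))"
    using R by (auto simp: sum_distrib_left intro!: mult_left_mono sum_mono mult_right_mono mnorm_nonneg)
  finally show ?thesis .
qed

lemma mtrace_mexp_scaled_lincomb_has_vector_derivative:
  assumes LC: "\<forall>l<N. L l \<in> carrier_mat d d" and PC: "P \<in> carrier_mat d d"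
    and S: "convex S" "x \<in> S"
    and r': "\<And>l s. l < N \<Longrightarrow> s \<in> S \<Longrightarrow> ((\<lambda>s. r s l) has_real_derivative r' s l) (at s within S)"
    and R: "\<And>l s. l < N \<Longrightarrow> s \<in> S \<Longrightarrow> \<bar>r s l\<bar> \<le> R"
    and R': "\<And>l s. l < N \<Longrightarrow> s \<in> S \<Longrightarrow> \<bar>r' s l\<bar> \<le> R'"
  shows "((\<lambda>s. mtrace (P * mexp d (scaled_lincomb d N L c (r s)))) has_vector_derivative
           c * (\<Sum>l<N. complex_of_real (r' x l) * duhamel d P (L l) (scaled_lincomb d N L c (r x))))
           (at x within S)"
proof -
  define X where "X = (\<lambda>s. scaled_lincomb d N L c (r s))"
  define X' where "X' = (\<lambda>s. scaled_lincomb d N L c (r' s))"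
  have D: "has_mat_derivative d X (X' s) s S" if "s \<in> S" for s
    unfolding has_mat_derivative_def
  proof (intro allI impI)
    fix a b assume "a < d" "b < d"
    moreover have "((\<lambda>s. c * (\<Sum>l<N. complex_of_real (r s l) * L l $$ (a,b))) has_vector_derivative
            c * (\<Sum>l<N. complex_of_real (r' s l) * L l $$ (a,b))) (at s within S)"
      using r' that
      by (intro has_vector_derivative_mult_right has_vector_derivative_sum
          has_vector_derivative_mult_left has_vector_derivative_of_real) auto
    ultimately show "((\<lambda>s. X s $$ (a,b)) has_vector_derivative X' s $$ (a,b)) (at s within S)"
      by (simp add: X_def X'_def scaled_lincomb_entry)
  qed
  have "((\<lambda>s. mtrace (P * mexp d (X s))) has_vector_derivative duhamel d P (X' x) (X x))
          (at x within S)"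
    using mnorm_scaled_lincomb_le[OF LC R] mnorm_scaled_lincomb_le[OF LC R']
    by (intro mtrace_mexp_has_vector_derivative[OF S _ _ PC D]) (auto simp: X_def X'_def)
  moreover have "duhamel d P (X' x) (X x) =
      c * (\<Sum>l<N. complex_of_real (r' x l) * duhamel d P (L l) (X x))"
    unfolding X'_def scaled_lincomb_def
    by (simp add: duhamel_smult[OF _ PC] duhamel_lincomb[OF _ PC LC] X_def)
  ultimately show ?thesis by (simp add: X_def)
qed

lemma mtrace_mexp_scaled_lincomb_partial:
  assumes LC: "\<forall>l<N. L l \<in> carrier_mat d d" and j: "j < N" and PC: "P \<in> carrier_mat d d"
  shows "((\<lambda>s. mtrace (P * mexp d (scaled_lincomb d N L c (r(j := s))))) has_vector_derivative
           c * duhamel d P (L j) (scaled_lincomb d N L c r)) (at (r j))"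
proof -
  define S where "S = {r j - 1 <..< r j + 1}"
  have "\<bar>(r(j := s)) l\<bar> \<le> (\<Sum>l<N. \<bar>r l\<bar>) + \<bar>r j\<bar> + 1" if "l < N" "s \<in> S" for l s
    using that member_le_sum[of l "{..<N}" "\<lambda>l. \<bar>r l\<bar>"] sum_nonneg[of "{..<N}" "\<lambda>l. \<bar>r l\<bar>"]
    by (auto simp: S_def)
  moreover have "((\<lambda>s. (r(j := s)) l) has_real_derivative (if l = j then 1 else 0)) (at s within S)"
    for l s
    by (cases "l = j") (auto intro!: derivative_eq_intros)
  ultimately have "((\<lambda>s. mtrace (P * mexp d (scaled_lincomb d N L c (r(j := s))))) has_vector_derivative
           c * (\<Sum>l<N. complex_of_real (if l = j then 1 else 0) * duhamel d P (L l)
                          (scaled_lincomb d N L c (r(j := r j))))) (at (r j) within S)"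
    by (intro mtrace_mexp_scaled_lincomb_has_vector_derivative[OF LC PC,
          where R="(\<Sum>l<N. \<bar>r l\<bar>) + \<bar>r j\<bar> + 1" and R'=1])
      (auto simp: S_def)
  moreover have "at (r j) within S = at (r j)"
    unfolding S_def by (rule at_within_open) auto
  moreover have "(\<Sum>l<N. complex_of_real (if l = j then 1 else 0) * duhamel d P (L l) X)
      = duhamel d P (L j) X" for X
  proof -
    have "(\<Sum>l<N. complex_of_real (if l = j then 1 else 0) * duhamel d P (L l) X)
        = (\<Sum>l<N. if l = j then duhamel d P (L l) X else 0)"
      by (intro sum.cong) auto
    then show ?thesis using j by simp
  qed
  ultimately show ?thesis by simp
qed


section \<open>Partial derivatives of \<open>K\<^sub>d\<close>\<close>

definition exp_coeff :: "nat \<Rightarrow> complex" where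
  "exp_coeff d = - \<i> * complex_of_real (sqrt (real d / 2))"

lemma Kd_eq_mtrace_mexp: "Kd d L r = mtrace (mexp d (scaled_lincomb d (d\<^sup>2 - 1) L (exp_coeff d) r))"
  by (simp add: Kd_def scaled_lincomb_def exp_coeff_def)

lemma pderiv_Kd:
  assumes LC: "\<forall>l<d\<^sup>2 - 1. L l \<in> carrier_mat d d" and j: "j < d\<^sup>2 - 1"
  shows "pderiv_j j (Kd d L) r =
    exp_coeff d * mtrace (L j * mexp d (scaled_lincomb d (d\<^sup>2 - 1) L (exp_coeff d) r))"
proof -
  have "((\<lambda>s. Kd d L (r(j := s))) has_vector_derivative
      exp_coeff d * mtrace (L j * mexp d (scaled_lincomb d (d\<^sup>2 - 1) L (exp_coeff d) r))) (at (r j))"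
    using mtrace_mexp_scaled_lincomb_partial[OF LC j one_carrier_mat, of "exp_coeff d" r] LC j
    by (simp add: Kd_eq_mtrace_mexp duhamel_one left_mult_one_mat[of _ d d])
  then show ?thesis unfolding pderiv_j_def by (rule vector_derivative_at)
qed

lemma pderiv_pderiv_Kd:
  assumes LC: "\<forall>l<d\<^sup>2 - 1. L l \<in> carrier_mat d d" and j: "j < d\<^sup>2 - 1" and l: "l < d\<^sup>2 - 1"
  shows "pderiv_j j (pderiv_j l (Kd d L)) r =
    exp_coeff d * (exp_coeff d * duhamel d (L j) (L l) (scaled_lincomb d (d\<^sup>2 - 1) L (exp_coeff d) r))"
proof -
  have "((\<lambda>s. exp_coeff d * mtrace (L l * mexp d (scaled_lincomb d (d\<^sup>2 - 1) L (exp_coeff d) (r(j := s)))))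
      has_vector_derivative
        exp_coeff d * (exp_coeff d * duhamel d (L l) (L j) (scaled_lincomb d (d\<^sup>2 - 1) L (exp_coeff d) r)))
      (at (r j))"
    using LC l by (intro has_vector_derivative_mult_right mtrace_mexp_scaled_lincomb_partial[OF LC j]) auto
  moreover have "pderiv_j l (Kd d L) =
      (\<lambda>r. exp_coeff d * mtrace (L l * mexp d (scaled_lincomb d (d\<^sup>2 - 1) L (exp_coeff d) r)))"
    using pderiv_Kd[OF LC l] by blast
  ultimately show ?thesis
    using LC j l by (simp only: pderiv_j_def[of j] vector_derivative_at duhamel_swap
        scaled_lincomb_carrier_mat)
qed


section \<open>A Gronwall argument\<close>

lemma nonneg_zero_if_deriv_le_linear:
  fixes \<psi> \<psi>' :: "real \<Rightarrow> real"
  assumes deriv: "\<And>s. s \<in> {t0..T} \<Longrightarrow> (\<psi> has_real_derivative \<psi>' s) (at s within {t0..T})"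
    and le: "\<And>s. s \<in> {t0..T} \<Longrightarrow> \<psi>' s \<le> K * \<psi> s"
    and nonneg: "\<And>s. 0 \<le> \<psi> s" and init: "\<psi> t0 = 0" and t: "t \<in> {t0..T}"
  shows "\<psi> t = 0"
proof -
  define \<phi> where "\<phi> = (\<lambda>s. exp (- K * s) * \<psi> s)"
  have \<phi>': "(\<phi> has_real_derivative exp (- K * s) * (\<psi>' s - K * \<psi> s)) (at s within {t0..T})"
    if "s \<in> {t0..T}" for s
    unfolding \<phi>_def using deriv[OF that]
    by (auto intro!: derivative_eq_intros simp: algebra_simps)
  have "continuous_on {t0..T} \<phi>"
    using \<phi>' unfolding continuous_on_eq_continuous_within by (meson DERIV_continuous)
  then have "continuous_on {t0..t} \<phi>"
    by (rule continuous_on_subset) (use t in auto)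
  then have "\<phi> t \<le> \<phi> t0"
  proof (rule DERIV_nonpos_imp_decreasing_open[rotated 2])
    fix x assume "t0 < x" "x < t"
    then have x: "x \<in> interior {t0..T}" "x \<in> {t0..T}" using t by auto
    have "(\<phi> has_real_derivative exp (- K * x) * (\<psi>' x - K * \<psi> x)) (at x)"
      using \<phi>'[OF x(2)] at_within_interior[OF x(1)] by simp
    moreover have "exp (- K * x) * (\<psi>' x - K * \<psi> x) \<le> 0"
      using le[OF x(2)] by (simp add: mult_nonneg_nonpos)
    ultimately show "\<exists>y. (\<phi> has_real_derivative y) (at x) \<and> y \<le> 0" by blast
  qed (use t in auto)
  then show ?thesis
    using init nonneg[of t] by (simp add: \<phi>_def mult_le_0_iff)
qed

lemma linear_ode_zero:
  fixes y y' :: "'i \<Rightarrow> real \<Rightarrow> complex"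
  assumes fin: "finite I" and C: "0 \<le> C"
    and der: "\<And>i t. i \<in> I \<Longrightarrow> t \<in> {t0..T} \<Longrightarrow> (y i has_vector_derivative y' i t) (at t within {t0..T})"
    and bnd: "\<And>i t. i \<in> I \<Longrightarrow> t \<in> {t0..T} \<Longrightarrow> cmod (y' i t) \<le> C * (\<Sum>k\<in>I. cmod (y k t))"
    and init: "\<And>i. i \<in> I \<Longrightarrow> y i t0 = 0"
    and i: "i \<in> I" and t: "t \<in> {t0..T}"
  shows "y i t = 0"
proof -
  define \<psi> where "\<psi> = (\<lambda>s. \<Sum>k\<in>I. Re (y k s) * Re (y k s) + Im (y k s) * Im (y k s))"
  define \<psi>' where "\<psi>' = (\<lambda>s. \<Sum>k\<in>I. 2 * (Re (y k s) * Re (y' k s) + Im (y k s) * Im (y' k s)))"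
  have \<psi>_cmod: "\<psi> s = (\<Sum>k\<in>I. cmod (y k s) ^ 2)" for s
    unfolding \<psi>_def by (intro sum.cong refl) (simp only: cmod_power2, simp only: power2_eq_square)
  have "(\<psi> has_real_derivative \<psi>' s) (at s within {t0..T})" if "s \<in> {t0..T}" for s
  proof -
    have "((\<lambda>s. Re (y k s)) has_vector_derivative Re (y' k s)) (at s within {t0..T})"
      "((\<lambda>s. Im (y k s)) has_vector_derivative Im (y' k s)) (at s within {t0..T})" if "k \<in> I" for k
      using bounded_linear.has_vector_derivative[OF bounded_linear_Re der[OF that \<open>s \<in> _\<close>]]
        bounded_linear.has_vector_derivative[OF bounded_linear_Im der[OF that \<open>s \<in> _\<close>]] by auto
    then have "(\<psi> has_vector_derivative (\<Sum>k\<in>I.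
        (Re (y k s) * Re (y' k s) + Re (y' k s) * Re (y k s)) +
        (Im (y k s) * Im (y' k s) + Im (y' k s) * Im (y k s)))) (at s within {t0..T})"
      unfolding \<psi>_def
      by (intro has_vector_derivative_sum has_vector_derivative_add has_vector_derivative_mult) auto
    then have "(\<psi> has_vector_derivative \<psi>' s) (at s within {t0..T})"
      unfolding \<psi>'_def by (simp add: algebra_simps)
    then show ?thesis by (simp add: has_real_derivative_iff_has_vector_derivative)
  qed
  moreover have "\<psi>' s \<le> (2 * C * real (card I)) * \<psi> s" if "s \<in> {t0..T}" for s
  proof -
    have "Re a * Re b + Im a * Im b \<le> cmod a * cmod b" for a b
      using complex_Re_le_cmod[of "cnj a * b"] by (simp add: norm_mult)
    then have "\<psi>' s \<le> (\<Sum>k\<in>I. 2 * (cmod (y k s) * cmod (y' k s)))"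
      unfolding \<psi>'_def by (intro sum_mono mult_left_mono) auto
    also have "\<dots> \<le> (\<Sum>k\<in>I. 2 * (cmod (y k s) * (C * (\<Sum>m\<in>I. cmod (y m s)))))"
      using bnd that by (intro sum_mono mult_left_mono) auto
    also have "\<dots> = C * (\<Sum>k\<in>I. \<Sum>m\<in>I. 2 * (cmod (y k s) * cmod (y m s)))"
      by (simp add: sum_distrib_left sum_distrib_right mult_ac)
    also have "\<dots> \<le> C * (\<Sum>k\<in>I. \<Sum>m\<in>I. cmod (y k s) ^ 2 + cmod (y m s) ^ 2)"
    proof (intro mult_left_mono C sum_mono)
      show "2 * (a * b) \<le> a^2 + b^2" for a b :: real
        using sum_squares_bound[of a b] by (simp add: mult.assoc)
    qed
    also have "\<dots> = (2 * C * real (card I)) * \<psi> s"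
      unfolding \<psi>_cmod by (simp add: sum.distrib sum_distrib_left algebra_simps)
    finally show ?thesis .
  qed
  moreover have "\<psi> t0 = 0" unfolding \<psi>_def using init by simp
  moreover have "0 \<le> \<psi> s" for s
    unfolding \<psi>_def by (intro sum_nonneg) auto
  ultimately have "\<psi> t = 0"
    using nonneg_zero_if_deriv_le_linear[where K="2 * C * real (card I)"] t by blast
  then show ?thesis
    using sum_nonneg_eq_0_iff[OF fin, of "\<lambda>k. cmod (y k t) ^ 2"] i by (simp add: \<psi>_cmod)
qed


section \<open>Structure constants of \<open>su(d)\<close>\<close>

lemma generators_carrier_mat: "su_generators d L dd ff \<Longrightarrow> \<forall>l<d\<^sup>2 - 1. L l \<in> carrier_mat d d"
  by (simp add: su_generators_def hermitian_mat_def)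

lemma mtrace_generators_mult_mult:
  assumes gen: "su_generators d L dd ff" and j: "j < d\<^sup>2 - 1" and k: "k < d\<^sup>2 - 1"
    and WC: "W \<in> carrier_mat d d"
  shows "mtrace (L j * L k * W) = (if j = k then complex_of_real (2 / real d) else 0) * mtrace W
     + (\<Sum>m<d\<^sup>2 - 1. (complex_of_real (dd j k m) + \<i> * complex_of_real (ff j k m)) * mtrace (L m * W))"
proof -
  define \<alpha> where "\<alpha> = (if j = k then complex_of_real (2 / real d) else 0)"
  define M where "M = lincomb d (d\<^sup>2 - 1) (\<lambda>m. complex_of_real (dd j k m) + \<i> * complex_of_real (ff j k m)) L"
  have "L j * L k = \<alpha> \<cdot>\<^sub>m 1\<^sub>m d + M"
    using gen j k unfolding su_generators_def \<alpha>_def M_def by blast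
  moreover have MC: "M \<in> carrier_mat d d" by (simp add: M_def)
  ultimately have "L j * L k * W = \<alpha> \<cdot>\<^sub>m 1\<^sub>m d * W + M * W"
    using add_mult_distrib_mat[OF _ MC WC] by simp
  also have "\<alpha> \<cdot>\<^sub>m 1\<^sub>m d * W = \<alpha> \<cdot>\<^sub>m W"
    using WC by (simp add: mult_smult_assoc_mat[OF one_carrier_mat WC] left_mult_one_mat)
  finally have "mtrace (L j * L k * W) = \<alpha> * mtrace W + mtrace (M * W)"
    using WC MC by (simp add: mtrace_add[of _ d] mtrace_smult[of _ d])
  also have "mtrace (M * W) = (\<Sum>m<d\<^sup>2 - 1. (complex_of_real (dd j k m) + \<i> * complex_of_real (ff j k m)) * mtrace (L m * W))"
    unfolding M_def by (rule mtrace_lincomb_mult[OF WC generators_carrier_mat[OF gen]])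
  finally show ?thesis unfolding \<alpha>_def .
qed

lemma structure_constants_cyclic:
  assumes gen: "su_generators d L dd ff"
    and j: "j < d\<^sup>2 - 1" and k: "k < d\<^sup>2 - 1" and m: "m < d\<^sup>2 - 1"
  shows "dd j k m = dd k m j \<and> ff j k m = ff k m j"
proof -
  have LC: "\<forall>l<d\<^sup>2 - 1. L l \<in> carrier_mat d d" by (rule generators_carrier_mat[OF gen])
  have triple: "mtrace (L a * L b * L c) = 2 * (complex_of_real (dd a b c) + \<i> * complex_of_real (ff a b c))"
    if a: "a < d\<^sup>2 - 1" and b: "b < d\<^sup>2 - 1" and c: "c < d\<^sup>2 - 1" for a b c
  proof -
    have tr0: "mtrace (L c) = 0" and
      orth: "\<And>m'. m' < d\<^sup>2 - 1 \<Longrightarrow> mtrace (L m' * L c) = (if m' = c then 2 else 0)"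
      using gen c unfolding su_generators_def by blast+
    have "(\<Sum>m'<d\<^sup>2 - 1. (complex_of_real (dd a b m') + \<i> * complex_of_real (ff a b m')) * mtrace (L m' * L c))
        = (\<Sum>m'<d\<^sup>2 - 1. if m' = c then (complex_of_real (dd a b m') + \<i> * complex_of_real (ff a b m')) * 2 else 0)"
      using orth by (intro sum.cong) auto
    then show ?thesis
      using mtrace_generators_mult_mult[OF gen a b, of "L c"] LC c tr0 by (simp add: mult.commute)
  qed
  have "mtrace (L j * L k * L m) = mtrace ((L k * L m) * L j)"
    using LC j k m mtrace_mult_comm[of "L j" d d "L k * L m"]
      assoc_mult_mat[of "L j" d d "L k" d "L m" d] by simp
  then have "2 * (complex_of_real (dd j k m) + \<i> * complex_of_real (ff j k m)) =
      2 * (complex_of_real (dd k m j) + \<i> * complex_of_real (ff k m j))"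
    using triple[OF j k m] triple[OF k m j] by metis
  then have e: "complex_of_real (dd j k m) + \<i> * complex_of_real (ff j k m) =
      complex_of_real (dd k m j) + \<i> * complex_of_real (ff k m j)"
    by (simp only: mult_cancel_left) simp
  show ?thesis
    using arg_cong[OF e, of Re] arg_cong[OF e, of Im] by simp
qed


lemma exp_coeff_sq: "exp_coeff d * exp_coeff d = - complex_of_real (real d / 2)"
  by (simp add: exp_coeff_def algebra_simps of_real_mult[symmetric])

lemma mtrace_generators_second_order:
  assumes gen: "su_generators d L dd ff" and d: "0 < d" and j: "j < d\<^sup>2 - 1"
    and WC: "W \<in> carrier_mat d d"
  shows "exp_coeff d * (exp_coeff d * (\<Sum>k<d\<^sup>2 - 1. complex_of_real (\<beta> k) * mtrace (L j * L k * W)))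
       = - mtrace W * complex_of_real (\<beta> j)
         + complex_of_real (sqrt (real d / 2)) *
           (\<Sum>k<d\<^sup>2 - 1. \<Sum>m<d\<^sup>2 - 1. (complex_of_real (ff k m j) - \<i> * complex_of_real (dd k m j))
              * complex_of_real (\<beta> k) * (exp_coeff d * mtrace (L m * W)))"
proof -
  define N where "N = d\<^sup>2 - 1"
  define c where "c = exp_coeff d"
  define F where "F = (\<lambda>k m. complex_of_real (\<beta> k) *
      ((complex_of_real (dd j k m) + \<i> * complex_of_real (ff j k m)) * mtrace (L m * W)))"
  have "(\<Sum>k<N. complex_of_real (\<beta> k) * mtrace (L j * L k * W))
      = (\<Sum>k<N. (if k = j then complex_of_real (\<beta> k) * complex_of_real (2 / real d) * mtrace W else 0)
           + (\<Sum>m<N. F k m))"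
    using j WC unfolding N_def F_def
    by (intro sum.cong refl) (auto simp: mtrace_generators_mult_mult[OF gen j] sum_distrib_left algebra_simps)
  also have "\<dots> = complex_of_real (\<beta> j) * complex_of_real (2 / real d) * mtrace W + (\<Sum>k<N. \<Sum>m<N. F k m)"
    using j by (simp add: N_def sum.distrib)
  finally have "c * (c * (\<Sum>k<N. complex_of_real (\<beta> k) * mtrace (L j * L k * W)))
      = c * c * (complex_of_real (\<beta> j) * complex_of_real (2 / real d) * mtrace W)
        + (\<Sum>k<N. \<Sum>m<N. c * (c * F k m))"
    by (simp add: algebra_simps sum_distrib_left)
  also have "c * c * (complex_of_real (\<beta> j) * complex_of_real (2 / real d) * mtrace W)
      = - mtrace W * complex_of_real (\<beta> j)"
    using d by (simp add: c_def exp_coeff_sq field_simps)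
  also have "c * (c * F k m) = complex_of_real (sqrt (real d / 2)) *
      ((complex_of_real (ff k m j) - \<i> * complex_of_real (dd k m j)) * complex_of_real (\<beta> k) *
       (c * mtrace (L m * W)))" if "k < N" "m < N" for k m
    using structure_constants_cyclic[OF gen j] that
    by (simp add: N_def F_def c_def exp_coeff_def algebra_simps)
  then have "(\<Sum>k<N. \<Sum>m<N. c * (c * F k m)) = (\<Sum>k<N. \<Sum>m<N. complex_of_real (sqrt (real d / 2)) *
      ((complex_of_real (ff k m j) - \<i> * complex_of_real (dd k m j))
        * complex_of_real (\<beta> k) * (c * mtrace (L m * W))))"
    by (intro sum.cong refl) auto
  also have "\<dots> = complex_of_real (sqrt (real d / 2)) *
      (\<Sum>k<N. \<Sum>m<N. (complex_of_real (ff k m j) - \<i> * complex_of_real (dd k m j))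
        * complex_of_real (\<beta> k) * (c * mtrace (L m * W)))"
    by (simp add: sum_distrib_left)
  finally show ?thesis unfolding N_def c_def .
qed


section \<open>The Cauchy problem\<close>

definition cauchy_rhs :: "nat \<Rightarrow> (nat \<Rightarrow> nat \<Rightarrow> nat \<Rightarrow> real) \<Rightarrow> (nat \<Rightarrow> nat \<Rightarrow> nat \<Rightarrow> real) \<Rightarrow>
    (nat \<Rightarrow> real) \<Rightarrow> complex \<Rightarrow> (nat \<Rightarrow> complex) \<Rightarrow> nat \<Rightarrow> complex" where
  "cauchy_rhs d dd ff \<beta> w0 w j =
     - w0 * complex_of_real (\<beta> j)
     + complex_of_real (sqrt (real d / 2)) *
       (\<Sum>k < d\<^sup>2 - 1. \<Sum>m < d\<^sup>2 - 1.
          (complex_of_real (ff k m j) - \<i> * complex_of_real (dd k m j)) * complex_of_real (\<beta> k) * w m)"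

definition cauchy_solution :: "nat \<Rightarrow> (nat \<Rightarrow> nat \<Rightarrow> nat \<Rightarrow> real) \<Rightarrow> (nat \<Rightarrow> nat \<Rightarrow> nat \<Rightarrow> real) \<Rightarrow>
    real \<Rightarrow> real \<Rightarrow> (real \<Rightarrow> nat \<Rightarrow> real) \<Rightarrow> (real \<Rightarrow> complex) \<Rightarrow> (real \<Rightarrow> nat \<Rightarrow> complex) \<Rightarrow> bool" where
  "cauchy_solution d dd ff t0 T b v0 v \<longleftrightarrow>
     v0 t0 = 1 \<and> (\<forall>j < d\<^sup>2 - 1. v t0 j = 0) \<and>
     (\<forall>t \<in> {t0..T}.
        (v0 has_vector_derivative (\<Sum>j < d\<^sup>2 - 1. complex_of_real (b t j) * v t j)) (at t within {t0..T}) \<and>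
        (\<forall>j < d\<^sup>2 - 1. ((\<lambda>s. v s j) has_vector_derivative cauchy_rhs d dd ff (b t) (v0 t) (v t) j)
           (at t within {t0..T})))"

lemma cauchy_rhs_diff:
  "cauchy_rhs d dd ff \<beta> v0 v j - cauchy_rhs d dd ff \<beta> u0 u j =
   cauchy_rhs d dd ff \<beta> (v0 - u0) (\<lambda>m. v m - u m) j"
proof -
  define S where "S = (\<lambda>w :: nat \<Rightarrow> complex. \<Sum>k<d\<^sup>2 - 1. \<Sum>m<d\<^sup>2 - 1.
      (complex_of_real (ff k m j) - \<i> * complex_of_real (dd k m j)) * complex_of_real (\<beta> k) * w m)"
  have S: "S (\<lambda>m. v m - u m) = S v - S u"
    by (simp add: S_def sum_subtractf[symmetric] right_diff_distrib)
  have rhs: "cauchy_rhs d dd ff \<beta> w0 w j =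
      - w0 * complex_of_real (\<beta> j) + complex_of_real (sqrt (real d / 2)) * S w" for w0 w
    by (simp add: cauchy_rhs_def S_def)
  show ?thesis unfolding rhs S by (simp add: algebra_simps)
qed

lemma norm_cauchy_rhs_le:
  assumes \<beta>: "\<And>k. k < d\<^sup>2 - 1 \<Longrightarrow> \<bar>\<beta> k\<bar> \<le> B" and j: "j < d\<^sup>2 - 1"
  shows "cmod (cauchy_rhs d dd ff \<beta> w0 w j) \<le>
    B * (1 + sqrt (real d / 2) *
      (\<Sum>k<d\<^sup>2 - 1. \<Sum>m<d\<^sup>2 - 1. cmod (complex_of_real (ff k m j) - \<i> * complex_of_real (dd k m j))))
    * (cmod w0 + (\<Sum>m<d\<^sup>2 - 1. cmod (w m)))"
    (is "_ \<le> B * (1 + ?s * ?C) * (cmod w0 + ?W)")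
proof -
  define N where "N = d\<^sup>2 - 1"
  define Cf where "Cf = (\<lambda>k m. complex_of_real (ff k m j) - \<i> * complex_of_real (dd k m j))"
  have B: "0 \<le> B" using \<beta>[OF j] by linarith
  have W: "0 \<le> ?W" by (intro sum_nonneg) auto
  have C: "0 \<le> ?C" by (intro sum_nonneg) auto
  have "cmod (\<Sum>k<N. \<Sum>m<N. Cf k m * complex_of_real (\<beta> k) * w m)
      \<le> (\<Sum>k<N. \<Sum>m<N. cmod (Cf k m) * (B * ?W))"
  proof (intro order_trans[OF norm_sum] sum_mono order_trans[OF norm_sum])
    fix k m assume "k \<in> {..<N}" "m \<in> {..<N}"
    then have "\<bar>\<beta> k\<bar> * cmod (w m) \<le> B * ?W"
      using \<beta> B member_le_sum[of m "{..<N}" "\<lambda>m. cmod (w m)"]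
      by (intro mult_mono) (auto simp: N_def)
    then show "cmod (Cf k m * complex_of_real (\<beta> k) * w m) \<le> cmod (Cf k m) * (B * ?W)"
      by (simp add: norm_mult mult.assoc mult_left_mono)
  qed
  also have "\<dots> = B * ?W * ?C"
    by (simp only: sum_distrib_right[symmetric]) (simp add: N_def Cf_def mult_ac)
  finally have S: "cmod (\<Sum>k<N. \<Sum>m<N. Cf k m * complex_of_real (\<beta> k) * w m) \<le> B * ?W * ?C" .
  have "cmod (cauchy_rhs d dd ff \<beta> w0 w j)
      \<le> cmod w0 * \<bar>\<beta> j\<bar> + ?s * cmod (\<Sum>k<N. \<Sum>m<N. Cf k m * complex_of_real (\<beta> k) * w m)"
    unfolding cauchy_rhs_def N_def Cf_def
    by (rule order_trans[OF norm_triangle_ineq]) (simp add: norm_mult)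
  also have "\<dots> \<le> cmod w0 * B + ?s * (B * ?W * ?C)"
    by (intro add_mono mult_left_mono \<beta> j S) auto
  also have "\<dots> \<le> B * (1 + ?s * ?C) * (cmod w0 + ?W)"
    using B W C by (simp add: algebra_simps)
  finally show ?thesis .
qed

lemma cauchy_solution_diff_has_vector_derivative:
  assumes v: "cauchy_solution d dd ff t0 T b v0 v" and u: "cauchy_solution d dd ff t0 T b u0 u"
    and s: "s \<in> {t0..T}"
  shows "((\<lambda>s. v0 s - u0 s) has_vector_derivative
      (\<Sum>j<d\<^sup>2 - 1. complex_of_real (b s j) * (v s j - u s j))) (at s within {t0..T})"
    and "j < d\<^sup>2 - 1 \<Longrightarrow> ((\<lambda>s. v s j - u s j) has_vector_derivative
      cauchy_rhs d dd ff (b s) (v0 s - u0 s) (\<lambda>m. v s m - u s m) j) (at s within {t0..T})"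
proof -
  have "((\<lambda>s. v0 s - u0 s) has_vector_derivative
      (\<Sum>j<d\<^sup>2 - 1. complex_of_real (b s j) * v s j) - (\<Sum>j<d\<^sup>2 - 1. complex_of_real (b s j) * u s j))
      (at s within {t0..T})"
    using v u s unfolding cauchy_solution_def by (intro has_vector_derivative_diff) auto
  then show "((\<lambda>s. v0 s - u0 s) has_vector_derivative
      (\<Sum>j<d\<^sup>2 - 1. complex_of_real (b s j) * (v s j - u s j))) (at s within {t0..T})"
    by (simp add: sum_subtractf[symmetric] right_diff_distrib)
  assume "j < d\<^sup>2 - 1"
  then have "((\<lambda>s. v s j - u s j) has_vector_derivative
      cauchy_rhs d dd ff (b s) (v0 s) (v s) j - cauchy_rhs d dd ff (b s) (u0 s) (u s) j)
      (at s within {t0..T})"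
    using v u s unfolding cauchy_solution_def by (intro has_vector_derivative_diff) auto
  then show "((\<lambda>s. v s j - u s j) has_vector_derivative
      cauchy_rhs d dd ff (b s) (v0 s - u0 s) (\<lambda>m. v s m - u s m) j) (at s within {t0..T})"
    by (simp add: cauchy_rhs_diff)
qed

lemma norm_sum_of_real_mult_le:
  assumes "\<And>j. j < N \<Longrightarrow> \<bar>\<beta> j\<bar> \<le> B"
  shows "cmod (\<Sum>j<N. complex_of_real (\<beta> j) * w j) \<le> B * (\<Sum>j<N. cmod (w j))"
  using assms
  by (auto simp: norm_mult sum_distrib_left intro!: order_trans[OF norm_sum] sum_mono mult_right_mono)

lemma continuous_components_bounded:
  fixes f :: "real \<Rightarrow> nat \<Rightarrow> real"
  assumes "\<forall>l<N. continuous_on {a..b} (\<lambda>s. f s l)"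
  obtains R where "0 \<le> R" "\<And>l s. l < N \<Longrightarrow> s \<in> {a..b} \<Longrightarrow> \<bar>f s l\<bar> \<le> R"
proof -
  have "continuous_on {a..b} (\<lambda>s. \<Sum>l<N. \<bar>f s l\<bar>)"
    using assms by (auto intro!: continuous_intros)
  then obtain R where R: "0 \<le> R" "\<And>s. s \<in> {a..b} \<Longrightarrow> norm (\<Sum>l<N. \<bar>f s l\<bar>) \<le> R"
    using continuous_on_compact_bound[OF compact_Icc] by metis
  have "\<bar>f s l\<bar> \<le> R" if "l < N" "s \<in> {a..b}" for l s
    using R(2)[OF that(2)] member_le_sum[of l "{..<N}" "\<lambda>l. \<bar>f s l\<bar>"] that by auto
  with R(1) show ?thesis by (rule that)
qed

text \<open>The difference of two solutions, indexed by \<open>None\<close> (for \<open>u\<^sub>0\<close>) and \<open>Some j\<close>,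
  solves a linear system with bounded coefficients and vanishes at \<open>t\<^sub>0\<close>.\<close>

lemma cauchy_solution_unique:
  assumes b_cont: "\<forall>j < d\<^sup>2 - 1. continuous_on {t0..T} (\<lambda>t. b t j)"
    and v: "cauchy_solution d dd ff t0 T b v0 v" and u: "cauchy_solution d dd ff t0 T b u0 u"
    and t: "t \<in> {t0..T}"
  shows "v0 t = u0 t \<and> (\<forall>j < d\<^sup>2 - 1. v t j = u t j)"
proof -
  define N where "N = d\<^sup>2 - 1"
  define Cf where "Cf = (\<lambda>j. \<Sum>k<N. \<Sum>m<N. cmod (complex_of_real (ff k m j) - \<i> * complex_of_real (dd k m j)))"
  obtain B where B0: "0 \<le> B" and b: "\<And>j s. j < N \<Longrightarrow> s \<in> {t0..T} \<Longrightarrow> \<bar>b s j\<bar> \<le> B"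
    using continuous_components_bounded[OF b_cont] unfolding N_def by metis
  define C where "C = B * (1 + sqrt (real d / 2) * (\<Sum>j<N. Cf j))"
  have Cf: "0 \<le> Cf j" for j unfolding Cf_def by (intro sum_nonneg) auto
  then have "0 \<le> sqrt (real d / 2) * (\<Sum>j<N. Cf j)" by (simp add: sum_nonneg)
  then have C0: "0 \<le> C" "B \<le> C"
    unfolding C_def using B0 mult_left_mono[of 1 "1 + sqrt (real d / 2) * (\<Sum>j<N. Cf j)" B] by auto
  have C: "B * (1 + sqrt (real d / 2) * Cf j) \<le> C" if "j < N" for j
    unfolding C_def using that B0 Cf by (intro mult_left_mono add_left_mono member_le_sum) auto
  define I where "I = insert None (Some ` {..<N})"
  define y where "y = (\<lambda>q s. case q of None \<Rightarrow> v0 s - u0 s | Some j \<Rightarrow> v s j - u s j)"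
  define y' where "y' = (\<lambda>q s. case q of
      None \<Rightarrow> (\<Sum>j<N. complex_of_real (b s j) * (v s j - u s j))
    | Some j \<Rightarrow> cauchy_rhs d dd ff (b s) (v0 s - u0 s) (\<lambda>m. v s m - u s m) j)"
  have sum_y: "(\<Sum>q\<in>I. cmod (y q s)) = cmod (v0 s - u0 s) + (\<Sum>j<N. cmod (v s j - u s j))" for s
    unfolding I_def y_def by (subst sum.insert) (auto simp: sum.reindex)
  have "y q t = 0" if "q \<in> I" for q
  proof (rule linear_ode_zero[where I=I and C=C and y=y and y'=y'])
    show "finite I" unfolding I_def by simp
    show "0 \<le> C" by (fact C0(1))
    have "v0 t0 = u0 t0" "\<And>j. j < N \<Longrightarrow> v t0 j = u t0 j"
      using v u by (simp_all add: cauchy_solution_def N_def)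
    then show "y q t0 = 0" if "q \<in> I" for q
      using that by (auto simp: I_def y_def)
    show "(y q has_vector_derivative y' q s) (at s within {t0..T})" if "q \<in> I" "s \<in> {t0..T}" for q s
      using cauchy_solution_diff_has_vector_derivative[OF v u that(2)] that(1)
      by (auto simp: I_def y_def y'_def N_def)
    show "cmod (y' q s) \<le> C * (\<Sum>k\<in>I. cmod (y k s))" if "q \<in> I" "s \<in> {t0..T}" for q s
    proof -
      define W where "W = (\<Sum>j<N. cmod (v s j - u s j))"
      have W: "0 \<le> W" unfolding W_def by (intro sum_nonneg) auto
      have "cmod (y' q s) \<le> C * (cmod (v0 s - u0 s) + W)"
      proof (cases q)
        case None
        then have "cmod (y' q s) \<le> B * W"
          unfolding y'_def W_def using b that(2) by (auto intro!: norm_sum_of_real_mult_le)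
        also have "\<dots> \<le> C * (cmod (v0 s - u0 s) + W)"
          using C0 B0 W by (intro mult_mono) auto
        finally show ?thesis .
      next
        case (Some j)
        with that(1) have j: "j < N" by (auto simp: I_def)
        have "cmod (y' q s) \<le> B * (1 + sqrt (real d / 2) * Cf j) * (cmod (v0 s - u0 s) + W)"
          using Some norm_cauchy_rhs_le[OF b[unfolded N_def, OF _ that(2)] j[unfolded N_def]]
          by (simp add: y'_def W_def Cf_def N_def)
        also have "\<dots> \<le> C * (cmod (v0 s - u0 s) + W)"
          using C[OF j] W by (intro mult_right_mono) auto
        finally show ?thesis .
      qed
      then show ?thesis by (simp add: sum_y W_def)
    qed
  qed fact+
  then have "y None t = 0" "\<And>j. j < N \<Longrightarrow> y (Some j) t = 0"
    by (auto simp: I_def)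
  then show ?thesis by (simp add: y_def N_def)
qed

section \<open>The evolution generated by \<open>H\<close>\<close>

locale su_evolution =
  fixes d :: nat and L :: "nat \<Rightarrow> complex mat" and dd ff :: "nat \<Rightarrow> nat \<Rightarrow> nat \<Rightarrow> real"
    and t0 T :: real and b0 :: "real \<Rightarrow> real" and b :: "real \<Rightarrow> nat \<Rightarrow> real"
    and n dn :: "real \<Rightarrow> nat \<Rightarrow> real" and U :: "real \<Rightarrow> complex mat"
  assumes d2: "d \<ge> 2"
    and gen: "su_generators d L dd ff"
    and tT: "t0 \<le> T"
    and b0_cont: "continuous_on {t0..T} b0"
    and n_deriv: "\<forall>j < d\<^sup>2 - 1. \<forall>t \<in> {t0..T}.
                    ((\<lambda>s. n s j) has_real_derivative dn t j) (at t within {t0..T})"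
    and dn_cont: "\<forall>j < d\<^sup>2 - 1. continuous_on {t0..T} (\<lambda>t. dn t j)"
    and U_carrier: "\<forall>t \<in> {t0..T}. U t \<in> carrier_mat d d"
    and U_ode: "\<forall>t \<in> {t0..T}. \<forall>a < d. \<forall>c < d.
        ((\<lambda>s. U s $$ (a,c)) has_vector_derivative
           (- \<i> * ((complex_of_real (b0 t) \<cdot>\<^sub>m 1\<^sub>m d
                    + complex_of_real (sqrt (real d / 2)) \<cdot>\<^sub>m
                        lincomb d (d\<^sup>2 - 1) (\<lambda>j. complex_of_real (b t j)) L) * U t) $$ (a,c)))
         (at t within {t0..T})"
    and U_init: "U t0 = 1\<^sub>m d"
    and U_formula: "\<forall>t \<in> {t0..T}.
        U t = exp (- \<i> * complex_of_real (integral {t0..t} b0)) \<cdot>\<^sub>m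
              mexp d ((- \<i> * complex_of_real (sqrt (real d / 2))) \<cdot>\<^sub>m
                 lincomb d (d\<^sup>2 - 1) (\<lambda>j. complex_of_real (n t j)) L)"
begin

definition W :: "real \<Rightarrow> complex mat" where
  "W t = mexp d (scaled_lincomb d (d\<^sup>2 - 1) L (exp_coeff d) (n t))"

definition B :: "real \<Rightarrow> complex mat" where
  "B t = lincomb d (d\<^sup>2 - 1) (\<lambda>j. complex_of_real (b t j)) L"

definition phase :: "real \<Rightarrow> complex" where
  "phase t = exp (\<i> * complex_of_real (integral {t0..t} b0))"

lemma W_carrier_mat[simp]: "W t \<in> carrier_mat d d"
  by (simp add: W_def)

lemma B_carrier_mat[simp]: "B t \<in> carrier_mat d d"
  by (simp add: B_def)

lemma generators_carrier: "\<forall>l<d\<^sup>2 - 1. L l \<in> carrier_mat d d"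
  by (rule generators_carrier_mat[OF gen])

lemma W_entry:
  assumes "s \<in> {t0..T}" "a < d" "c < d"
  shows "W s $$ (a,c) = phase s * U s $$ (a,c)"
proof -
  have "U s $$ (a,c) = exp (- \<i> * complex_of_real (integral {t0..s} b0)) * W s $$ (a,c)"
    using U_formula assms by (simp add: W_def scaled_lincomb_def exp_coeff_def mexp_def)
  then show ?thesis by (simp add: phase_def mult.assoc exp_add[symmetric])
qed

lemma W_init: "W t0 = 1\<^sub>m d"
  using tT W_entry[of t0] U_init carrier_matD[OF W_carrier_mat]
  by (intro eq_matI) (auto simp: phase_def)

lemma phase_has_vector_derivative:
  assumes "t \<in> {t0..T}"
  shows "(phase has_vector_derivative \<i> * complex_of_real (b0 t) * phase t) (at t within {t0..T})"
proof -
  have "((\<lambda>s. \<i> * complex_of_real (integral {t0..s} b0)) has_vector_derivative \<i> * complex_of_real (b0 t))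
      (at t within {t0..T})"
    by (intro has_vector_derivative_mult_right has_vector_derivative_of_real
        integral_has_real_derivative b0_cont assms)
  from field_vector_diff_chain_within[OF this has_field_derivative_at_within[OF DERIV_exp]]
  show ?thesis by (simp add: phase_def[abs_def] o_def)
qed

lemma U_entry_has_vector_derivative:
  assumes t: "t \<in> {t0..T}" and a: "a < d" and c: "c < d"
  shows "((\<lambda>s. U s $$ (a,c)) has_vector_derivative
      - \<i> * (complex_of_real (b0 t) * U t $$ (a,c)
              + complex_of_real (sqrt (real d / 2)) * (B t * U t) $$ (a,c))) (at t within {t0..T})"
proof -
  have "((\<lambda>s. U s $$ (a,c)) has_vector_derivative
      - \<i> * ((complex_of_real (b0 t) \<cdot>\<^sub>m 1\<^sub>m d + complex_of_real (sqrt (real d / 2)) \<cdot>\<^sub>m B t) * U t) $$ (a,c))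
      (at t within {t0..T})"
    using U_ode t a c unfolding B_def by blast
  moreover have "((complex_of_real (b0 t) \<cdot>\<^sub>m 1\<^sub>m d + complex_of_real (sqrt (real d / 2)) \<cdot>\<^sub>m B t) * U t) $$ (a,c)
      = complex_of_real (b0 t) * U t $$ (a,c) + complex_of_real (sqrt (real d / 2)) * (B t * U t) $$ (a,c)"
  proof -
    have UC: "U t \<in> carrier_mat d d" using U_carrier t by blast
    then show ?thesis
      using a c carrier_matD[OF B_carrier_mat] carrier_matD[OF UC]
      by (simp add: add_mult_distrib_mat[of _ d d _ _ d] mult_smult_assoc_mat[of _ d d _ d]
          left_mult_one_mat[of _ d d])
  qed
  ultimately show ?thesis by simp
qed

lemma W_has_mat_derivative:
  assumes t: "t \<in> {t0..T}"
  shows "has_mat_derivative d W (exp_coeff d \<cdot>\<^sub>m (B t * W t)) t {t0..T}"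
  unfolding has_mat_derivative_def
proof (intro allI impI)
  fix a c assume a: "a < d" and c: "c < d"
  define sq where "sq = complex_of_real (sqrt (real d / 2))"
  have "(B t * W t) $$ (a,c) = phase t * (B t * U t) $$ (a,c)"
    using U_carrier t a c W_entry[OF t]
    by (simp add: index_mult_mat_sum[of _ d d _ d] sum_distrib_left mult_ac)
  moreover have "((\<lambda>s. phase s * U s $$ (a,c)) has_vector_derivative
      phase t * (- \<i> * (complex_of_real (b0 t) * U t $$ (a,c) + sq * (B t * U t) $$ (a,c)))
      + \<i> * complex_of_real (b0 t) * phase t * U t $$ (a,c)) (at t within {t0..T})"
    unfolding sq_def
    by (rule has_vector_derivative_mult[OF phase_has_vector_derivative U_entry_has_vector_derivative])
      (use t a c in auto)
  ultimately have D: "((\<lambda>s. phase s * U s $$ (a,c)) has_vector_derivative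
      (exp_coeff d \<cdot>\<^sub>m (B t * W t)) $$ (a,c)) (at t within {t0..T})"
    using a c carrier_matD[OF mult_carrier_mat[OF B_carrier_mat W_carrier_mat, of t t]]
    by (simp add: exp_coeff_def sq_def algebra_simps)
  show "((\<lambda>s. W s $$ (a,c)) has_vector_derivative (exp_coeff d \<cdot>\<^sub>m (B t * W t)) $$ (a,c))
      (at t within {t0..T})"
    by (rule has_vector_derivative_transform[OF t _ D]) (simp add: W_entry a c)
qed

lemma mtrace_W_has_vector_derivative:
  assumes t: "t \<in> {t0..T}" and PC: "P \<in> carrier_mat d d"
  shows "((\<lambda>s. mtrace (P * W s)) has_vector_derivative
       exp_coeff d * (\<Sum>k<d\<^sup>2 - 1. complex_of_real (b t k) * mtrace (P * L k * W t))) (at t within {t0..T})"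
proof -
  have "mtrace (P * (exp_coeff d \<cdot>\<^sub>m (B t * W t))) = exp_coeff d * mtrace (P * B t * W t)"
    using PC by (simp add: mult_smult_distrib[of _ d d _ d] mtrace_smult[of _ d]
        assoc_mult_mat[of _ d d _ d _ d])
  also have "mtrace (P * B t * W t) = (\<Sum>k<d\<^sup>2 - 1. complex_of_real (b t k) * mtrace (P * L k * W t))"
    unfolding B_def by (rule mtrace_mult_lincomb_mult[OF PC W_carrier_mat generators_carrier])
  finally show ?thesis
    using mtrace_mult_has_vector_derivative[OF PC W_carrier_mat _ W_has_mat_derivative[OF t]] PC
    by simp
qed

lemma mtrace_W_has_vector_derivative_chain:
  assumes t: "t \<in> {t0..T}" and PC: "P \<in> carrier_mat d d"
  shows "((\<lambda>s. mtrace (P * W s)) has_vector_derivative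
       exp_coeff d * (\<Sum>l<d\<^sup>2 - 1. complex_of_real (dn t l) *
         duhamel d P (L l) (scaled_lincomb d (d\<^sup>2 - 1) L (exp_coeff d) (n t)))) (at t within {t0..T})"
proof -
  have "\<forall>l<d\<^sup>2 - 1. continuous_on {t0..T} (\<lambda>s. n s l)"
    using n_deriv by (auto simp: continuous_on_eq_continuous_within intro: DERIV_continuous)
  then obtain R where R: "\<And>l s. l < d\<^sup>2 - 1 \<Longrightarrow> s \<in> {t0..T} \<Longrightarrow> \<bar>n s l\<bar> \<le> R"
    using continuous_components_bounded by metis
  obtain R' where R': "\<And>l s. l < d\<^sup>2 - 1 \<Longrightarrow> s \<in> {t0..T} \<Longrightarrow> \<bar>dn s l\<bar> \<le> R'"
    using continuous_components_bounded[OF dn_cont] by metis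
  show ?thesis
    unfolding W_def using n_deriv R R'
    by (intro mtrace_mexp_scaled_lincomb_has_vector_derivative[OF generators_carrier PC
          convex_real_interval(5) t, where R=R and R'=R']) auto
qed


lemma Kd_n_eq: "Kd d L (n t) = mtrace (W t)"
  by (simp add: Kd_eq_mtrace_mexp W_def)

lemma pderiv_Kd_n: "j < d\<^sup>2 - 1 \<Longrightarrow> pderiv_j j (Kd d L) (n t) = exp_coeff d * mtrace (L j * W t)"
  by (simp add: pderiv_Kd[OF generators_carrier] W_def)

lemma mtrace_W_derivative_identity:
  assumes t: "t \<in> {t0<..<T}" and PC: "P \<in> carrier_mat d d"
  shows "(\<Sum>k<d\<^sup>2 - 1. complex_of_real (b t k) * mtrace (P * L k * W t)) =
    (\<Sum>l<d\<^sup>2 - 1. complex_of_real (dn t l) *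
       duhamel d P (L l) (scaled_lincomb d (d\<^sup>2 - 1) L (exp_coeff d) (n t)))"
proof -
  have ti: "t \<in> interior {t0..T}" "t \<in> {t0..T}" using t by auto
  have "exp_coeff d * (\<Sum>k<d\<^sup>2 - 1. complex_of_real (b t k) * mtrace (P * L k * W t)) =
    exp_coeff d * (\<Sum>l<d\<^sup>2 - 1. complex_of_real (dn t l) *
       duhamel d P (L l) (scaled_lincomb d (d\<^sup>2 - 1) L (exp_coeff d) (n t)))"
    using mtrace_W_has_vector_derivative[OF ti(2) PC] mtrace_W_has_vector_derivative_chain[OF ti(2) PC]
    unfolding at_within_interior[OF ti(1)] by (rule vector_derivative_unique_at)
  moreover have "exp_coeff d \<noteq> 0" using d2 by (simp add: exp_coeff_def)
  ultimately show ?thesis by simp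
qed

lemma gradient_Kd_orthogonal:
  assumes "t \<in> {t0<..<T}"
  shows "(\<Sum>j < d\<^sup>2 - 1. pderiv_j j (Kd d L) (n t) * complex_of_real (dn t j - b t j)) = 0"
proof -
  have "(\<Sum>k<d\<^sup>2 - 1. complex_of_real (b t k) * mtrace (L k * W t)) =
      (\<Sum>l<d\<^sup>2 - 1. complex_of_real (dn t l) * mtrace (L l * W t))"
    using mtrace_W_derivative_identity[OF assms one_carrier_mat] generators_carrier
    by (simp add: left_mult_one_mat[of _ d d] duhamel_one W_def)
  then show ?thesis
    by (simp add: pderiv_Kd_n algebra_simps sum_subtractf sum_distrib_left[symmetric])
qed

lemma hessian_Kd_identity:
  assumes t: "t \<in> {t0<..<T}" and j: "j < d\<^sup>2 - 1"
  shows "(\<Sum>l < d\<^sup>2 - 1. pderiv_j j (pderiv_j l (Kd d L)) (n t) * complex_of_real (dn t l))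
    = - complex_of_real (b t j) * Kd d L (n t)
      + complex_of_real (sqrt (real d / 2)) *
        (\<Sum>k < d\<^sup>2 - 1. \<Sum>m < d\<^sup>2 - 1.
           (complex_of_real (ff k m j) - \<i> * complex_of_real (dd k m j))
           * complex_of_real (b t k) * pderiv_j m (Kd d L) (n t))"
proof -
  have LjC: "L j \<in> carrier_mat d d" using generators_carrier j by blast
  have "(\<Sum>l < d\<^sup>2 - 1. pderiv_j j (pderiv_j l (Kd d L)) (n t) * complex_of_real (dn t l))
      = exp_coeff d * (exp_coeff d * (\<Sum>l<d\<^sup>2 - 1. complex_of_real (dn t l) *
          duhamel d (L j) (L l) (scaled_lincomb d (d\<^sup>2 - 1) L (exp_coeff d) (n t))))"
    by (simp add: pderiv_pderiv_Kd[OF generators_carrier j] sum_distrib_left mult_ac)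
  also have "\<dots> = exp_coeff d * (exp_coeff d *
      (\<Sum>k<d\<^sup>2 - 1. complex_of_real (b t k) * mtrace (L j * L k * W t)))"
    by (simp only: mtrace_W_derivative_identity[OF t LjC])
  also have "\<dots> = - mtrace (W t) * complex_of_real (b t j)
      + complex_of_real (sqrt (real d / 2)) *
        (\<Sum>k<d\<^sup>2 - 1. \<Sum>m<d\<^sup>2 - 1. (complex_of_real (ff k m j) - \<i> * complex_of_real (dd k m j))
           * complex_of_real (b t k) * (exp_coeff d * mtrace (L m * W t)))"
    using d2 by (intro mtrace_generators_second_order[OF gen _ j W_carrier_mat]) simp
  finally show ?thesis
    by (simp add: Kd_n_eq pderiv_Kd_n mult.commute)
qed

lemma Kd_n_has_vector_derivative:
  assumes t: "t \<in> {t0..T}"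
  shows "((\<lambda>t. Kd d L (n t) / of_nat d) has_vector_derivative
      (\<Sum>j<d\<^sup>2 - 1. complex_of_real (b t j) * (pderiv_j j (Kd d L) (n t) / of_nat d))) (at t within {t0..T})"
  using has_vector_derivative_divide_const[OF mtrace_W_has_vector_derivative[OF t one_carrier_mat], of "of_nat d"]
    generators_carrier
  by (simp add: Kd_n_eq pderiv_Kd_n left_mult_one_mat[of _ d d] sum_divide_distrib sum_distrib_left mult_ac)

lemma pderiv_Kd_n_has_vector_derivative:
  assumes t: "t \<in> {t0..T}" and j: "j < d\<^sup>2 - 1"
  shows "((\<lambda>s. pderiv_j j (Kd d L) (n s) / of_nat d) has_vector_derivative
      cauchy_rhs d dd ff (b t) (Kd d L (n t) / of_nat d) (\<lambda>m. pderiv_j m (Kd d L) (n t) / of_nat d) j)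
      (at t within {t0..T})"
proof -
  have LjC: "L j \<in> carrier_mat d d" using generators_carrier j by blast
  have "((\<lambda>s. exp_coeff d * mtrace (L j * W s) / of_nat d) has_vector_derivative
      exp_coeff d * (exp_coeff d * (\<Sum>k<d\<^sup>2 - 1. complex_of_real (b t k) * mtrace (L j * L k * W t)))
        / of_nat d) (at t within {t0..T})"
    by (intro has_vector_derivative_divide_const has_vector_derivative_mult_right
        mtrace_W_has_vector_derivative[OF t LjC])
  also have "exp_coeff d * (exp_coeff d * (\<Sum>k<d\<^sup>2 - 1. complex_of_real (b t k) * mtrace (L j * L k * W t)))
      = - mtrace (W t) * complex_of_real (b t j)
        + complex_of_real (sqrt (real d / 2)) *
          (\<Sum>k<d\<^sup>2 - 1. \<Sum>m<d\<^sup>2 - 1. (complex_of_real (ff k m j) - \<i> * complex_of_real (dd k m j))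
             * complex_of_real (b t k) * (exp_coeff d * mtrace (L m * W t)))"
    using d2 by (intro mtrace_generators_second_order[OF gen _ j W_carrier_mat]) simp
  also have "(\<dots>) / of_nat d = cauchy_rhs d dd ff (b t) (Kd d L (n t) / of_nat d)
      (\<lambda>m. pderiv_j m (Kd d L) (n t) / of_nat d) j"
  proof -
    have "(\<Sum>k<d\<^sup>2 - 1. \<Sum>m<d\<^sup>2 - 1. (complex_of_real (ff k m j) - \<i> * complex_of_real (dd k m j))
             * complex_of_real (b t k) * (pderiv_j m (Kd d L) (n t) / of_nat d))
        = (\<Sum>k<d\<^sup>2 - 1. \<Sum>m<d\<^sup>2 - 1. (complex_of_real (ff k m j) - \<i> * complex_of_real (dd k m j))
             * complex_of_real (b t k) * (exp_coeff d * mtrace (L m * W t))) / of_nat d"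
      unfolding sum_divide_distrib by (intro sum.cong refl) (simp add: pderiv_Kd_n)
    then show ?thesis
      by (simp add: cauchy_rhs_def Kd_n_eq diff_divide_distrib)
  qed
  finally show ?thesis
    using j by (simp add: pderiv_Kd_n)
qed

lemma cauchy_solution_Kd:
  "cauchy_solution d dd ff t0 T b (\<lambda>t. Kd d L (n t) / of_nat d) (\<lambda>t j. pderiv_j j (Kd d L) (n t) / of_nat d)"
  unfolding cauchy_solution_def
proof (intro conjI ballI allI impI Kd_n_has_vector_derivative pderiv_Kd_n_has_vector_derivative)
  show "Kd d L (n t0) / of_nat d = 1"
    using d2 by (simp add: Kd_n_eq W_init mtrace_one)
  show "pderiv_j j (Kd d L) (n t0) / of_nat d = 0" if "j < d\<^sup>2 - 1" for j
    using gen that generators_carrier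
    by (simp add: pderiv_Kd_n W_init right_mult_one_mat[of _ d d] su_generators_def)
qed

end

theorem theorem1:
  fixes d :: nat and L :: "nat \<Rightarrow> complex mat" and dd ff :: "nat \<Rightarrow> nat \<Rightarrow> nat \<Rightarrow> real"
    and t0 T :: real and b0 :: "real \<Rightarrow> real" and b :: "real \<Rightarrow> nat \<Rightarrow> real"
    and n dn :: "real \<Rightarrow> nat \<Rightarrow> real" and U :: "real \<Rightarrow> complex mat"
  assumes d2: "d \<ge> 2"
    and gen: "su_generators d L dd ff"
    and tT: "t0 < T"
    and b0_cont: "continuous_on {t0..T} b0"
    and b_cont: "\<forall>j < d\<^sup>2 - 1. continuous_on {t0..T} (\<lambda>t. b t j)"
    and n_deriv: "\<forall>j < d\<^sup>2 - 1. \<forall>t \<in> {t0..T}.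
                    ((\<lambda>s. n s j) has_real_derivative dn t j) (at t within {t0..T})"
    and dn_cont: "\<forall>j < d\<^sup>2 - 1. continuous_on {t0..T} (\<lambda>t. dn t j)"
    and n_init: "\<forall>j < d\<^sup>2 - 1. n t0 j = 0"
    and U_carrier: "\<forall>t \<in> {t0..T}. U t \<in> carrier_mat d d"
    and U_ode: "\<forall>t \<in> {t0..T}. \<forall>a < d. \<forall>c < d.
        ((\<lambda>s. U s $$ (a,c)) has_vector_derivative
           (- \<i> * ((complex_of_real (b0 t) \<cdot>\<^sub>m 1\<^sub>m d
                    + complex_of_real (sqrt (real d / 2)) \<cdot>\<^sub>m
                        lincomb d (d\<^sup>2 - 1) (\<lambda>j. complex_of_real (b t j)) L) * U t) $$ (a,c)))
         (at t within {t0..T})"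
    and U_init: "U t0 = 1\<^sub>m d"
    and U_formula: "\<forall>t \<in> {t0..T}.
        U t = exp (- \<i> * complex_of_real (integral {t0..t} b0)) \<cdot>\<^sub>m
              mexp d ((- \<i> * complex_of_real (sqrt (real d / 2))) \<cdot>\<^sub>m
                 lincomb d (d\<^sup>2 - 1) (\<lambda>j. complex_of_real (n t j)) L)"
  shows
    \<comment> \<open>the given functions solve the Cauchy problem\<close>
    "(let u0 = (\<lambda>t. Kd d L (n t) / of_nat d);
          u = (\<lambda>t j. pderiv_j j (Kd d L) (n t) / of_nat d)
      in u0 t0 = 1 \<and> (\<forall>j < d\<^sup>2 - 1. u t0 j = 0) \<and>
         (\<forall>t \<in> {t0..T}.
            (u0 has_vector_derivative (\<Sum>j < d\<^sup>2 - 1. complex_of_real (b t j) * u t j))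
              (at t within {t0..T}) \<and>
            (\<forall>j < d\<^sup>2 - 1. ((\<lambda>s. u s j) has_vector_derivative
               (- u0 t * complex_of_real (b t j)
                + complex_of_real (sqrt (real d / 2)) *
                  (\<Sum>k < d\<^sup>2 - 1. \<Sum>m < d\<^sup>2 - 1.
                     (complex_of_real (ff k m j) - \<i> * complex_of_real (dd k m j))
                     * complex_of_real (b t k) * u t m)))
               (at t within {t0..T}))))
     \<comment> \<open>and it is the unique solution\<close>
     \<and> (\<forall>v0 v. v0 t0 = 1 \<and> (\<forall>j < d\<^sup>2 - 1. v t0 j = 0) \<and>
         (\<forall>t \<in> {t0..T}.
            (v0 has_vector_derivative (\<Sum>j < d\<^sup>2 - 1. complex_of_real (b t j) * v t j))
              (at t within {t0..T}) \<and>
            (\<forall>j < d\<^sup>2 - 1. ((\<lambda>s. v s j) has_vector_derivative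
               (- v0 t * complex_of_real (b t j)
                + complex_of_real (sqrt (real d / 2)) *
                  (\<Sum>k < d\<^sup>2 - 1. \<Sum>m < d\<^sup>2 - 1.
                     (complex_of_real (ff k m j) - \<i> * complex_of_real (dd k m j))
                     * complex_of_real (b t k) * v t m)))
               (at t within {t0..T})))
         \<longrightarrow> (\<forall>t \<in> {t0..T}. v0 t = Kd d L (n t) / of_nat d \<and>
               (\<forall>j < d\<^sup>2 - 1. v t j = pderiv_j j (Kd d L) (n t) / of_nat d)))
     \<comment> \<open>(i)\<close>
     \<and> (\<forall>t \<in> {t0<..<T}.
          (\<Sum>j < d\<^sup>2 - 1. pderiv_j j (Kd d L) (n t) * complex_of_real (dn t j - b t j)) = 0)
     \<comment> \<open>(ii)\<close>
     \<and> (\<forall>t \<in> {t0<..<T}. \<forall>j < d\<^sup>2 - 1.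
          (\<Sum>l < d\<^sup>2 - 1. pderiv_j j (pderiv_j l (Kd d L)) (n t) * complex_of_real (dn t l))
          = - complex_of_real (b t j) * Kd d L (n t)
            + complex_of_real (sqrt (real d / 2)) *
              (\<Sum>k < d\<^sup>2 - 1. \<Sum>m < d\<^sup>2 - 1.
                 (complex_of_real (ff k m j) - \<i> * complex_of_real (dd k m j))
                 * complex_of_real (b t k) * pderiv_j m (Kd d L) (n t)))"
proof -
  interpret su_evolution d L dd ff t0 T b0 b n dn U
    using assms by unfold_locales auto
  have sol: "cauchy_solution d dd ff t0 T b (\<lambda>t. Kd d L (n t) / of_nat d)
      (\<lambda>t j. pderiv_j j (Kd d L) (n t) / of_nat d)"
    by (rule cauchy_solution_Kd)
  have "\<forall>v0 v. cauchy_solution d dd ff t0 T b v0 v \<longrightarrow>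
      (\<forall>t \<in> {t0..T}. v0 t = Kd d L (n t) / of_nat d \<and>
        (\<forall>j < d\<^sup>2 - 1. v t j = pderiv_j j (Kd d L) (n t) / of_nat d))"
    using cauchy_solution_unique[OF b_cont _ sol] by blast
  with sol gradient_Kd_orthogonal hessian_Kd_identity show ?thesis
    unfolding Let_def cauchy_solution_def cauchy_rhs_def by blast
qed

end
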